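(* Under the standing assumptions: (i) For any $b$ with $\max_ib_i<b<1$ there exist constants $C_+,C_->0$, independent of $m\in\mathbb{Z}$ and $r\in\mathbb{Z}_{>0}$, such that, writing $r=uN+j$ as below, \[|A(m;r)|<C_+\,a_1^{m}q^{\frac{m^2}{2N}+\frac m2+u}\ (m\ge0),\qquad |A(m;r)|<C_-\,b^{-m}q^{u}\ (m<0).\] (ii) There exist constants $D_+,D_->0$, independent of $m$ and $r$, such that \[|B(r;m)|<D_+\,a_N^{-m}q^{-\frac{m^2}{2N}+\epsilon m-(\frac12+\epsilon)u}\ (m\ge0),\qquad |B(r;m)|<D_-\,a_1^{-m}q^{u}\ (m<0).\]
   Context: Standing assumptions: $0<q<1$, $a_1>\dots>a_N$, $a_i,b_i\in(0,1)$ distinct, $a_1/a_N<q^{-1/2+\epsilon}$ with fixed $\epsilon\in(0,1/2)$; $t>0$, $k\in\mathbb{Z}_{\ge0}$; $(x;q)_\infty=\prod_{j\ge0}(1-xq^j)$; $f(m)=\frac{tq^{1/2+k+m}}{1+tq^{1/2+k+m}}$. For $r\in\mathbb{Z}_{>0}$ write $r=uN+j$ with $j\in\{1,\dots,N\}$, $u\in\mathbb{Z}_{\ge0}$, and set $\tilde a_r=a_jq^u$. Define for $m\in\mathbb{Z}$, $r\in\mathbb{Z}_{>0}$: \[A(m;r)=f(m)\frac{1}{2\pi i}\oint_C\frac{dz}{z^{1+m}}\frac{1}{z-\tilde a_r^{-1}}\prod_{i=1}^N\frac{(a_iz;q)_\infty}{(b_i/z;q)_\infty},\qquad B(r;m)=\tilde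 a_r^{-m}\operatorname*{Res}_{w=\tilde a_r^{-1}}\prod_{i=1}^N\frac{(b_i/w;q)_\infty}{(a_iw;q)_\infty},\] where $C$ is a positively oriented circle centered at $0$ of radius greater than $\max_ib_i$ (the integrand has no singularity at $\tilde a_r^{-1}$, so the value does not depend on the radius). *)

theory Defs
  imports "HOL-Complex_Analysis.Complex_Analysis"
begin

definition qpoch :: "complex \<Rightarrow> real \<Rightarrow> complex" where
  "qpoch x q = (\<Prod>j. 1 - x * complex_of_real (q ^ j))"

definition fB :: "real \<Rightarrow> real \<Rightarrow> nat \<Rightarrow> int \<Rightarrow> real" where
  "fB q t k m = t * q powr (1/2 + real k + real_of_int m) / (1 + t * q powr (1/2 + real k + real_of_int m))"

text \<open>For r > 0 write r = u N + j with j in {1..N}: then u = (r-1) div N, j = (r-1) mod N + 1.\<close>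
definition uidx :: "nat \<Rightarrow> nat \<Rightarrow> nat" where
  "uidx N r = (r - 1) div N"

definition jidx :: "nat \<Rightarrow> nat \<Rightarrow> nat" where
  "jidx N r = (r - 1) mod N + 1"

definition atil :: "real \<Rightarrow> nat \<Rightarrow> (nat \<Rightarrow> real) \<Rightarrow> nat \<Rightarrow> real" where
  "atil q N a r = a (jidx N r) * q ^ uidx N r"

text \<open>A(m;r); the contour is the positively oriented unit circle (radius 1 > max b_i).\<close>
definition Aker :: "real \<Rightarrow> nat \<Rightarrow> (nat \<Rightarrow> real) \<Rightarrow> (nat \<Rightarrow> real) \<Rightarrow> real \<Rightarrow> nat \<Rightarrow> int \<Rightarrow> nat \<Rightarrow> complex" where
  "Aker q N a b t k m r =
     complex_of_real (fB q t k m) * (1 / (2 * pi * \<i>)) *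
     contour_integral (circlepath 0 1)
       (\<lambda>z. 1 / z powi (1 + m) * (1 / (z - complex_of_real (1 / atil q N a r))) *
            (\<Prod>i\<in>{1..N}. qpoch (complex_of_real (a i) * z) q / qpoch (complex_of_real (b i) / z) q))"

definition Bker :: "real \<Rightarrow> nat \<Rightarrow> (nat \<Rightarrow> real) \<Rightarrow> (nat \<Rightarrow> real) \<Rightarrow> nat \<Rightarrow> int \<Rightarrow> complex" where
  "Bker q N a b r m =
     complex_of_real (atil q N a r powr (- real_of_int m)) *
     residue (\<lambda>w. \<Prod>i\<in>{1..N}. qpoch (complex_of_real (b i) / w) q / qpoch (complex_of_real (a i) * w) q)
             (complex_of_real (1 / atil q N a r))"

end

(*
  Both kernels are controlled through the size of the products (x;q)_inf.

  A(m;r): the integrand is holomorphic for |z| > max b_i except at z = 1/a~_r, and that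
  singularity is removable because (a_j z;q)_inf vanishes there. So the unit circle may be
  replaced by any circle |z| = R. For m < 0 take R = b'. For m >= 0 take R = q^(1/2-p)/a_1 with
  p = floor(m/N) + 1: on that circle the theta-function bound |(x;q)_inf| <= C q^(-p^2/2)
  produces the Gaussian factor after completing the square in m, and the hypothesis
  a_1/a_N < q^(-1/2+eps) keeps the pole 1/a~_r at distance of order q^(-u) from the circle.

  B(r;m): the residue at the simple pole c = 1/a~_r is bounded by the Cauchy estimate on the
  circle |w - c| = delta c/(u+1). On it the factors of (a_i w;q)_inf with index l < u have size
  about a_i c q^l, those with l > u are close to 1, and the one with l = u is bounded below by the
  separation of the a_i. The product of the large factors, estimated with the ratio hypothesis,
  gives the exponent -m^2/(2N) + eps m - (1/2+eps) u after completing a square.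
*)
theory Submission
  imports Defs
begin

section \<open>The q-Pochhammer symbol\<close>

lemma convergent_prod_qpoch:
  assumes "0 < q" "q < 1"
  shows "convergent_prod (\<lambda>j. 1 - x * complex_of_real (q ^ j))"
proof -
  have "summable (\<lambda>j. norm x * q ^ j)"
    using assms by (intro summable_mult summable_geometric) auto
  moreover have "norm ((1 - x * complex_of_real (q ^ j)) - 1) = norm x * q ^ j" for j
    using assms by (simp add: norm_mult norm_power)
  ultimately have "summable (\<lambda>j. norm ((1 - x * complex_of_real (q ^ j)) - 1))" by simp
  thus ?thesis
    by (intro abs_convergent_prod_imp_convergent_prod summable_imp_abs_convergent_prod)
qed

lemma qpoch_LIMSEQ:
  assumes "0 < q" "q < 1"
  shows "(\<lambda>n. \<Prod>j<n. 1 - x * complex_of_real (q ^ j)) \<longlonglongrightarrow> qpoch x q"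
  using convergent_prod_LIMSEQ[OF convergent_prod_qpoch[OF assms, of x]]
  unfolding qpoch_def LIMSEQ_lessThan_iff_atMost by simp

lemma norm_qpoch_le:
  assumes "0 < q" "q < 1" "\<And>n. norm (\<Prod>j<n. 1 - x * complex_of_real (q ^ j)) \<le> B"
  shows "norm (qpoch x q) \<le> B"
  using tendsto_norm[OF qpoch_LIMSEQ[OF assms(1,2), of x]] assms(3)
  by (intro LIMSEQ_le_const2) auto

lemma norm_qpoch_ge:
  assumes "0 < q" "q < 1" "\<And>n. n \<ge> n0 \<Longrightarrow> B \<le> norm (\<Prod>j<n. 1 - x * complex_of_real (q ^ j))"
  shows "B \<le> norm (qpoch x q)"
  using tendsto_norm[OF qpoch_LIMSEQ[OF assms(1,2), of x]] assms(3)
  by (intro LIMSEQ_le_const) auto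

lemma qpoch_eq_0I:
  assumes "0 < q" "q < 1" "x * complex_of_real (q ^ u) = 1"
  shows "qpoch x q = 0"
proof -
  have "(\<lambda>n. \<Prod>j<n. 1 - x * complex_of_real (q ^ j)) \<longlonglongrightarrow> 0"
  proof (rule tendsto_eventually)
    show "\<forall>\<^sub>F n in sequentially. (\<Prod>j<n. 1 - x * complex_of_real (q ^ j)) = 0"
      using eventually_gt_at_top[of u]
      by eventually_elim (use assms(3) in \<open>auto intro!: prod_zero bexI[of _ u]\<close>)
  qed
  thus ?thesis using LIMSEQ_unique qpoch_LIMSEQ[OF assms(1,2)] by blast
qed

lemma qpoch_nonzero:
  assumes "0 < q" "q < 1" "\<And>j. x * complex_of_real (q ^ j) \<noteq> 1"
  shows "qpoch x q \<noteq> 0"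
  unfolding qpoch_def
  by (rule prodinf_nonzero[OF convergent_prod_qpoch[OF assms(1,2)]]) (use assms(3) in auto)

lemma holomorphic_qpoch:
  assumes "0 < q" "q < 1"
  shows "(\<lambda>x. qpoch x q) holomorphic_on UNIV"
proof (rule holomorphic_uniform_sequence[where f = "\<lambda>n x. \<Prod>j<n. 1 - x * complex_of_real (q ^ j)"])
  fix n show "(\<lambda>x. \<Prod>j<n. 1 - x * complex_of_real (q ^ j)) holomorphic_on UNIV"
    by (intro holomorphic_intros)
next
  fix x :: complex
  let ?A = "cball x 1"
  have "uniformly_convergent_on ?A (\<lambda>N y. \<Prod>n<N. 1 + (- y * complex_of_real (q ^ n)))"
  proof (rule uniformly_convergent_on_prod)
    show "continuous_on ?A (\<lambda>y. - y * complex_of_real (q ^ n))" for n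
      by (intro continuous_intros)
    show "uniformly_convergent_on ?A (\<lambda>N y. \<Sum>n<N. norm (- y * complex_of_real (q ^ n)))"
    proof (rule Weierstrass_m_test')
      fix n y assume "y \<in> ?A"
      hence "norm y \<le> norm x + 1" using norm_triangle_sub[of y x]
        by (simp add: dist_norm norm_minus_commute)
      thus "norm (norm (- y * complex_of_real (q ^ n))) \<le> (norm x + 1) * q ^ n"
        using assms by (simp add: norm_mult norm_power mult_right_mono)
    next
      show "summable (\<lambda>n. (norm x + 1) * q ^ n)"
        using assms by (intro summable_mult summable_geometric) auto
    qed
  qed simp
  hence "uniform_limit ?A (\<lambda>N y. \<Prod>n<N. 1 - y * complex_of_real (q ^ n))
           (\<lambda>y. lim (\<lambda>N. \<Prod>n<N. 1 - y * complex_of_real (q ^ n))) sequentially"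
    using uniformly_convergent_uniform_limit_iff by fastforce
  also have "(\<lambda>y. lim (\<lambda>N. \<Prod>n<N. 1 - y * complex_of_real (q ^ n))) = (\<lambda>y. qpoch y q)"
    using qpoch_LIMSEQ[OF assms] by (auto intro: limI)
  finally show "\<exists>d>0. cball x d \<subseteq> UNIV \<and>
      uniform_limit (cball x d) (\<lambda>n x. \<Prod>j<n. 1 - x * complex_of_real (q ^ j)) (\<lambda>x. qpoch x q) sequentially"
    by (intro exI[of _ 1]) auto
qed auto

lemma holomorphic_on_qpoch_compose:
  assumes "0 < q" "q < 1" "f holomorphic_on A"
  shows "(\<lambda>z. qpoch (f z) q) holomorphic_on A"
  using holomorphic_on_compose[OF assms(3) holomorphic_on_subset[OF holomorphic_qpoch[OF assms(1,2)]]]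
  by (simp add: o_def)

lemma prod_one_plus_geometric_le_exp:
  fixes X q :: real
  assumes "0 \<le> X" "0 < q" "q < 1"
  shows "(\<Prod>j<n. 1 + X * q ^ j) \<le> exp (X / (1 - q))"
proof -
  have "(\<Prod>j<n. 1 + X * q ^ j) \<le> (\<Prod>j<n. exp (X * q ^ j))"
    using assms exp_ge_add_one_self by (intro prod_mono) auto
  also have "\<dots> = exp (\<Sum>j<n. X * q ^ j)" by (simp add: exp_sum)
  also have "(\<Sum>j<n. X * q ^ j) \<le> (\<Sum>j. X * q ^ j)"
    using assms by (intro sum_le_suminf summable_mult summable_geometric) auto
  also have "(\<Sum>j. X * q ^ j) = X / (1 - q)"
    using assms by (simp add: suminf_mult suminf_geometric divide_simps)
  finally show ?thesis by simp
qed

lemma norm_qpoch_partial_le: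
  fixes q :: real and x :: complex
  shows "norm (\<Prod>j<n. 1 - x * complex_of_real (q ^ j)) \<le> (\<Prod>j<n. 1 + norm x * \<bar>q\<bar> ^ j)"
proof -
  have "norm (1 - x * complex_of_real (q ^ j)) \<le> 1 + norm x * \<bar>q\<bar> ^ j" for j
    using norm_triangle_ineq4[of 1 "x * complex_of_real (q ^ j)"]
    by (simp add: norm_mult norm_power power_abs)
  thus ?thesis
    unfolding prod_norm[symmetric] by (intro prod_mono) auto
qed

lemma norm_qpoch_le_exp:
  fixes q X :: real and x :: complex
  assumes "0 < q" "q < 1" "norm x \<le> X"
  shows "norm (qpoch x q) \<le> exp (X / (1 - q))"
proof (rule norm_qpoch_le[OF assms(1,2)])
  fix n
  have "norm (\<Prod>j<n. 1 - x * complex_of_real (q ^ j)) \<le> (\<Prod>j<n. 1 + norm x * q ^ j)"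
    using norm_qpoch_partial_le[of x q n] assms by simp
  also have "\<dots> \<le> (\<Prod>j<n. 1 + X * q ^ j)"
    using assms by (intro prod_mono) (auto intro!: mult_right_mono)
  also have "\<dots> \<le> exp (X / (1 - q))"
    using assms norm_ge_zero[of x] by (intro prod_one_plus_geometric_le_exp) linarith+
  finally show "norm (\<Prod>j<n. 1 - x * complex_of_real (q ^ j)) \<le> exp (X / (1 - q))" .
qed

lemma exp_le_one_minus:
  fixes z \<beta> :: real
  assumes "0 \<le> z" "z \<le> \<beta>" "\<beta> < 1"
  shows "exp (- z / (1 - \<beta>)) \<le> 1 - z"
proof -
  have "exp (- z / (1 - \<beta>)) \<le> exp (- z / (1 - z))"
    using assms by (simp add: frac_le)
  also have "\<dots> = inverse (exp (z / (1 - z)))"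
    by (simp add: exp_minus)
  also have "\<dots> \<le> inverse (1 + z / (1 - z))"
  proof -
    have "0 < 1 + z / (1 - z)" using assms by (simp add: add_pos_nonneg)
    thus ?thesis by (rule le_imp_inverse_le[OF exp_ge_add_one_self])
  qed
  also have "inverse (1 + z / (1 - z)) = 1 - z"
    using assms by (simp add: field_simps)
  finally show ?thesis .
qed

lemma prod_one_minus_geometric_ge_exp:
  fixes \<gamma> q :: real and A :: "nat set"
  assumes "0 \<le> \<gamma>" "\<gamma> < 1" "0 < q" "q < 1" "finite A"
  shows "exp (- \<gamma> / ((1 - \<gamma>) * (1 - q))) \<le> (\<Prod>k\<in>A. 1 - \<gamma> * q ^ k)"
proof -
  have "(\<Sum>k\<in>A. q ^ k) \<le> (\<Sum>k. q ^ k)"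
    using assms by (intro sum_le_suminf summable_geometric) auto
  also have "\<dots> = 1 / (1 - q)" using assms by (simp add: suminf_geometric)
  finally have "- (\<gamma> / (1 - \<gamma>)) * (1 / (1 - q)) \<le> - (\<gamma> / (1 - \<gamma>)) * (\<Sum>k\<in>A. q ^ k)"
    using assms by (intro mult_left_mono_neg) auto
  moreover have "(\<Sum>k\<in>A. - (\<gamma> * q ^ k) / (1 - \<gamma>)) = - (\<gamma> / (1 - \<gamma>)) * (\<Sum>k\<in>A. q ^ k)"
    by (simp add: sum_distrib_left sum_negf)
  ultimately have "exp (- \<gamma> / ((1 - \<gamma>) * (1 - q))) \<le> exp (\<Sum>k\<in>A. - (\<gamma> * q ^ k) / (1 - \<gamma>))"
    by (simp add: field_simps)
  also have "\<dots> = (\<Prod>k\<in>A. exp (- (\<gamma> * q ^ k) / (1 - \<gamma>)))"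
    using assms(5) by (simp add: exp_sum)
  also have "\<dots> \<le> (\<Prod>k\<in>A. 1 - \<gamma> * q ^ k)"
  proof (rule prod_mono)
    fix k
    have "\<gamma> * q ^ k \<le> \<gamma>" using assms by (simp add: mult_left_le power_le_one)
    thus "0 \<le> exp (- (\<gamma> * q ^ k) / (1 - \<gamma>)) \<and> exp (- (\<gamma> * q ^ k) / (1 - \<gamma>)) \<le> 1 - \<gamma> * q ^ k"
      using exp_le_one_minus[of "\<gamma> * q ^ k" \<gamma>] assms by simp
  qed
  finally show ?thesis .
qed

lemma prod_one_minus_geometric_reindex_ge_exp:
  fixes \<gamma> q :: real and g :: "'b \<Rightarrow> nat"
  assumes "0 \<le> \<gamma>" "\<gamma> < 1" "0 < q" "q < 1" "finite A" "inj_on g A"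
  shows "exp (- \<gamma> / ((1 - \<gamma>) * (1 - q))) \<le> (\<Prod>l\<in>A. 1 - \<gamma> * q ^ g l)"
  using prod_one_minus_geometric_ge_exp[of \<gamma> q "g ` A"] assms
    prod.reindex[OF assms(6), of "\<lambda>k. 1 - \<gamma> * q ^ k"]
  by simp

lemma norm_qpoch_ge_exp:
  fixes q \<beta> :: real and y :: complex
  assumes "0 < q" "q < 1" "norm y \<le> \<beta>" "\<beta> < 1"
  shows "exp (- \<beta> / ((1 - \<beta>) * (1 - q))) \<le> norm (qpoch y q)"
proof (rule norm_qpoch_ge[OF assms(1,2), of 0])
  fix n :: nat
  have \<beta>0: "0 \<le> \<beta>" using assms norm_ge_zero[of y] by linarith
  have "exp (- \<beta> / ((1 - \<beta>) * (1 - q))) \<le> (\<Prod>j<n. 1 - \<beta> * q ^ j)"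
    using \<beta>0 assms by (intro prod_one_minus_geometric_ge_exp) auto
  also have "\<dots> \<le> (\<Prod>j<n. norm (1 - y * complex_of_real (q ^ j)))"
  proof (rule prod_mono)
    fix j
    have qj: "0 \<le> q ^ j" "q ^ j \<le> 1" using assms by (auto simp: power_le_one)
    have "norm y * q ^ j \<le> \<beta> * q ^ j" using assms qj by (intro mult_right_mono) auto
    moreover have "\<beta> * q ^ j \<le> \<beta>" using \<beta>0 qj by (simp add: mult_left_le)
    moreover have "1 - norm y * q ^ j \<le> norm (1 - y * complex_of_real (q ^ j))"
      using norm_triangle_ineq2[of 1 "y * complex_of_real (q ^ j)"] assms(1)
      by (simp add: norm_mult norm_power)
    ultimately show "0 \<le> 1 - \<beta> * q ^ j \<and> 1 - \<beta> * q ^ j \<le> norm (1 - y * complex_of_real (q ^ j))"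
      using assms by linarith
  qed
  also have "\<dots> = norm (\<Prod>j<n. 1 - y * complex_of_real (q ^ j))" by (simp add: prod_norm)
  finally show "exp (- \<beta> / ((1 - \<beta>) * (1 - q))) \<le> norm (\<Prod>j<n. 1 - y * complex_of_real (q ^ j))" .
qed

lemma odd_power_ratio_Suc:
  fixes h :: real
  assumes "0 < h"
  shows "h ^ (2 * Suc j + 1) / h ^ (2 * Suc p) = h ^ (2 * j + 1) / h ^ (2 * p)"
proof -
  have "h ^ (2 * Suc j + 1) / h ^ (2 * Suc p) = (h\<^sup>2 * h ^ (2 * j + 1)) / (h\<^sup>2 * h ^ (2 * p))"
    by (simp add: power_add power_mult_distrib mult_ac power2_eq_square)
  thus ?thesis using assms by simp
qed

text \<open>A theta-function estimate: the first p factors are of size h^(2j+1-2p) and together give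
  the Gaussian factor h^(-p^2); the remaining ones are bounded by a geometric series.\<close>
lemma prod_one_plus_shifted_odd_powers_le:
  fixes h :: real
  assumes h: "0 < h" "h < 1"
  shows "(\<Prod>j<n. 1 + h ^ (2*j+1) / h ^ (2*p))
           \<le> (\<Prod>i<p. 1 + h ^ (2*i+1)) * exp (h / (1 - h\<^sup>2)) / h ^ (p\<^sup>2)"
proof (induction p arbitrary: n)
  case 0
  have "(\<Prod>j<n. 1 + h ^ (2*j+1)) = (\<Prod>j<n. 1 + h * (h\<^sup>2) ^ j)"
    by (intro prod.cong refl) (simp add: power_mult)
  also have "\<dots> \<le> exp (h / (1 - h\<^sup>2))"
    using h by (intro prod_one_plus_geometric_le_exp) (auto simp: power_less_one_iff)
  finally show ?case by simp
next
  case (Suc p)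
  have hp: "0 < h ^ k" for k using h by simp
  have "h\<^sup>2 < 1" using h by (simp add: power_less_one_iff)
  hence "0 \<le> h / (1 - h\<^sup>2)" using h by (intro divide_nonneg_pos) auto
  hence E1: "1 \<le> exp (h / (1 - h\<^sup>2))" by simp
  have P1: "1 \<le> (\<Prod>i<Suc p. 1 + h ^ (2*i+1))" using h by (intro prod_ge_1) auto
  show ?case
  proof (cases n)
    case 0
    have "1 * 1 \<le> (\<Prod>i<Suc p. 1 + h ^ (2*i+1)) * exp (h / (1 - h\<^sup>2))"
      using P1 E1 by (intro mult_mono) auto
    also have "\<dots> \<le> (\<Prod>i<Suc p. 1 + h ^ (2*i+1)) * exp (h / (1 - h\<^sup>2)) / h ^ (Suc p)\<^sup>2"
      using hp[of "(Suc p)\<^sup>2"] P1 E1 h by (simp add: le_divide_eq mult_left_le power_le_one)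
    finally show ?thesis using 0 by simp
  next
    case (Suc n')
    have "(\<Prod>j<n. 1 + h ^ (2*j+1) / h ^ (2*Suc p))
          = (1 + h / h ^ (2*Suc p)) * (\<Prod>j<n'. 1 + h ^ (2*j+1) / h ^ (2*p))"
      unfolding Suc by (subst prod.lessThan_Suc_shift) (simp add: odd_power_ratio_Suc[OF h(1)])
    also have "\<dots> \<le> (1 + h / h ^ (2*Suc p)) * ((\<Prod>i<p. 1 + h ^ (2*i+1)) * exp (h / (1 - h\<^sup>2)) / h ^ (p\<^sup>2))"
      using Suc.IH[of n'] h by (intro mult_left_mono) auto
    also have "\<dots> = (\<Prod>i<Suc p. 1 + h ^ (2*i+1)) * exp (h / (1 - h\<^sup>2)) / h ^ (Suc p)\<^sup>2"
    proof -
      have "(Suc p)\<^sup>2 = p\<^sup>2 + (2*p+1)" by (simp add: power2_eq_square)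
      hence "h ^ (Suc p)\<^sup>2 = h ^ (p\<^sup>2) * h ^ (2*p+1)" by (simp only: power_add)
      moreover have "h ^ (2 * Suc p) = h ^ (2*p+1) * h" by (simp add: power_add)
      ultimately show ?thesis using hp[of "p\<^sup>2"] hp[of "2*p+1"] h by (simp add: field_simps)
    qed
    finally show ?thesis .
  qed
qed

lemma norm_qpoch_le_gaussian:
  fixes h :: real and x :: complex
  assumes h: "0 < h" "h < 1" and x: "norm x \<le> h / h ^ (2*p)"
  shows "norm (qpoch x (h^2)) \<le> exp (h / (1 - h^2)) ^ 2 / h ^ (p^2)"
proof (rule norm_qpoch_le)
  have hsq: "h * (h^2)^j = h ^ (2*j+1)" for j by (simp add: power_mult)
  show "0 < h^2" "h^2 < 1" using h by (auto simp: power_less_one_iff)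
  fix n
  have "norm (\<Prod>j<n. 1 - x * complex_of_real ((h^2) ^ j)) \<le> (\<Prod>j<n. 1 + norm x * \<bar>h^2\<bar> ^ j)"
    by (rule norm_qpoch_partial_le)
  also have "\<dots> \<le> (\<Prod>j<n. 1 + h ^ (2*j+1) / h ^ (2*p))"
  proof (rule prod_mono)
    fix j
    have "norm x * \<bar>h^2\<bar> ^ j \<le> h / h ^ (2*p) * (h^2) ^ j"
      using x h by (intro mult_mono) auto
    also have "\<dots> = h ^ (2*j+1) / h ^ (2*p)"
      by (simp add: power_mult[symmetric] power_add mult.commute)
    finally show "0 \<le> 1 + norm x * \<bar>h^2\<bar> ^ j \<and> 1 + norm x * \<bar>h^2\<bar> ^ j \<le> 1 + h ^ (2*j+1) / h ^ (2*p)"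
      by (simp add: add_nonneg_nonneg)
  qed
  also have "\<dots> \<le> (\<Prod>i<p. 1 + h ^ (2*i+1)) * exp (h / (1 - h^2)) / h ^ (p^2)"
    by (rule prod_one_plus_shifted_odd_powers_le[OF h])
  also have "\<dots> \<le> exp (h / (1 - h^2)) * exp (h / (1 - h^2)) / h ^ (p^2)"
  proof -
    have "(\<Prod>i<p. 1 + h ^ (2*i+1)) = (\<Prod>i<p. 1 + h * (h^2) ^ i)"
      by (intro prod.cong refl) (simp add: hsq)
    also have "\<dots> \<le> exp (h / (1 - h^2))"
      using h by (intro prod_one_plus_geometric_le_exp) (auto simp: power_less_one_iff)
    finally show ?thesis using h by (intro divide_right_mono mult_right_mono) auto
  qed
  finally show "norm (\<Prod>j<n. 1 - x * complex_of_real ((h^2) ^ j)) \<le> exp (h / (1 - h^2)) ^ 2 / h ^ (p^2)"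
    by (simp add: power2_eq_square)
qed


lemma contour_integral_circlepath_radius_eq:
  assumes S: "open S" and G: "G holomorphic_on S" and r: "0 < r1" "0 < r2"
    and ann: "\<And>z. min r1 r2 \<le> norm z \<Longrightarrow> norm z \<le> max r1 r2 \<Longrightarrow> z \<in> S"
  shows "contour_integral (circlepath 0 r1) G = contour_integral (circlepath 0 r2) G"
proof (rule Cauchy_theorem_homotopic_loops[OF _ S G])
  show "homotopic_loops S (circlepath 0 r1) (circlepath 0 r2)"
  proof (rule homotopic_loops_linear)
    fix t :: real
    show "closed_segment (circlepath 0 r1 t) (circlepath 0 r2 t) \<subseteq> S"
    proof
      fix w assume "w \<in> closed_segment (circlepath 0 r1 t) (circlepath 0 r2 t)"
      then obtain s where s: "0 \<le> s" "s \<le> 1"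
        and w: "w = (1 - s) *\<^sub>R circlepath 0 r1 t + s *\<^sub>R circlepath 0 r2 t"
        unfolding closed_segment_def by auto
      define e where "e = exp (2 * of_real pi * \<i> * of_real t)"
      have ne: "norm e = 1" unfolding e_def by (simp add: norm_exp_eq_Re)
      have we: "w = complex_of_real ((1 - s) * r1 + s * r2) * e"
        unfolding w circlepath e_def by (simp add: scaleR_conv_of_real algebra_simps)
      have "norm w = \<bar>(1 - s) * r1 + s * r2\<bar>"
        by (simp only: we norm_mult norm_of_real ne mult_1_right)
      hence nw: "norm w = (1 - s) * r1 + s * r2"
        using s r by simp
      have "(1 - s) * min r1 r2 + s * min r1 r2 \<le> (1 - s) * r1 + s * r2"
        "(1 - s) * r1 + s * r2 \<le> (1 - s) * max r1 r2 + s * max r1 r2"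
        using s by (intro add_mono mult_left_mono; simp)+
      thus "w \<in> S" using ann nw by (simp add: algebra_simps)
    qed
  qed auto
qed auto

lemma prod_lessThan_split_at:
  fixes u n :: nat
  assumes "u < n"
  shows "(\<Prod>l<n. f l) = (\<Prod>l<u. f l) * f u * (\<Prod>l\<in>{u<..<n}. f l)"
proof -
  have "{..<n} = {..<u} \<union> ({u} \<union> {u<..<n})" using assms by auto
  hence "(\<Prod>l<n. f l) = (\<Prod>l\<in>{..<u} \<union> ({u} \<union> {u<..<n}). f l)" by simp
  also have "\<dots> = (\<Prod>l<u. f l) * (\<Prod>l\<in>{u} \<union> {u<..<n}. f l)"
    by (rule prod.union_disjoint) auto
  also have "(\<Prod>l\<in>{u} \<union> {u<..<n}. f l) = f u * (\<Prod>l\<in>{u<..<n}. f l)"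
    by (subst prod.union_disjoint) auto
  finally show ?thesis by (simp add: mult_ac)
qed

lemma prod_lessThan_power_eq_powr:
  fixes q :: real
  assumes "0 < q"
  shows "(\<Prod>l<n. q ^ l) = q powr (real n * (real n - 1) / 2)"
proof (induction n)
  case (Suc n)
  have "(\<Prod>l<Suc n. q ^ l) = q powr (real n * (real n - 1) / 2) * q powr real n"
    using Suc assms by (simp add: powr_realpow)
  also have "\<dots> = q powr (real (Suc n) * (real (Suc n) - 1) / 2)"
    by (simp add: powr_add[symmetric] field_simps)
  finally show ?case .
qed (use assms in simp)

lemma prod_if_eq_single:
  assumes "finite A" "j \<in> A"
  shows "(\<Prod>i\<in>A. if i = j then x else y) = x * y ^ (card A - 1)"
proof -
  have "(\<Prod>i\<in>A. if i = j then x else y) = x * (\<Prod>i\<in>A - {j}. if i = j then x else y)"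
    using assms by (simp add: prod.remove)
  also have "(\<Prod>i\<in>A - {j}. if i = j then x else y) = (\<Prod>i\<in>A - {j}. y)"
    by (intro prod.cong) auto
  finally show ?thesis using assms by (simp add: card_Diff_singleton)
qed

lemma inj_on_imp_separated:
  fixes f :: "'a \<Rightarrow> real"
  assumes "finite I" "inj_on f I"
  shows "\<exists>\<delta>>0. \<forall>i\<in>I. \<forall>j\<in>I. i \<noteq> j \<longrightarrow> \<delta> \<le> \<bar>f i - f j\<bar>"
proof -
  define D where "D = insert 1 ((\<lambda>(i, j). \<bar>f i - f j\<bar>) ` {p \<in> I \<times> I. fst p \<noteq> snd p})"
  have "finite D" unfolding D_def using assms(1) by simp
  moreover have "\<forall>d\<in>D. 0 < d"
    unfolding D_def using assms(2) by (auto simp: inj_on_def)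
  ultimately have "0 < Min D" by (simp add: D_def)
  moreover have "\<forall>i\<in>I. \<forall>j\<in>I. i \<noteq> j \<longrightarrow> Min D \<le> \<bar>f i - f j\<bar>"
    using \<open>finite D\<close> unfolding D_def by (auto intro!: Min_le)
  ultimately show ?thesis by blast
qed

lemma less_twice_bound:
  fixes x K y :: real
  assumes "x \<le> K * y" "0 < K" "0 < y"
  shows "x < (2 * K) * y"
  using assms mult_pos_pos[of K y] by linarith

lemma norm_one_minus_scaled_ge_small:
  fixes x :: real and \<zeta> :: complex
  assumes "0 \<le> x"
  shows "1 - x * (1 + norm \<zeta>) \<le> norm (1 - complex_of_real x * (1 + \<zeta>))"
proof -
  have "norm (complex_of_real x * (1 + \<zeta>)) \<le> x * (1 + norm \<zeta>)"
    using assms norm_triangle_ineq[of 1 \<zeta>] by (simp add: norm_mult mult_left_mono)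
  thus ?thesis using norm_triangle_ineq2[of 1 "complex_of_real x * (1 + \<zeta>)"] by simp
qed

lemma norm_one_minus_scaled_ge_large:
  fixes x :: real and \<zeta> :: complex
  assumes "0 \<le> x"
  shows "x * (1 - norm \<zeta>) - 1 \<le> norm (1 - complex_of_real x * (1 + \<zeta>))"
proof -
  have "x * (1 - norm \<zeta>) \<le> x * norm (1 + \<zeta>)"
    using assms norm_triangle_ineq2[of 1 "-\<zeta>"] by (intro mult_left_mono) auto
  thus ?thesis using assms norm_triangle_ineq3[of "complex_of_real x * (1 + \<zeta>)" 1]
    by (simp add: norm_mult norm_minus_commute)
qed

lemma fB_nonneg: "0 < q \<Longrightarrow> 0 < t \<Longrightarrow> 0 \<le> fB q t k m"
  unfolding fB_def by (intro divide_nonneg_pos add_pos_nonneg) auto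

lemma fB_le:
  assumes "0 < q" "0 < t"
  shows "fB q t k m \<le> 1" "fB q t k m \<le> t * q powr (1/2 + real k + real_of_int m)"
proof -
  define x where "x = t * q powr (1/2 + real k + real_of_int m)"
  have "0 \<le> x" unfolding x_def using assms by simp
  hence "x / (1 + x) \<le> 1" "x / (1 + x) \<le> x" by (auto simp: divide_le_eq algebra_simps)
  thus "fB q t k m \<le> 1" "fB q t k m \<le> t * q powr (1/2 + real k + real_of_int m)"
    unfolding fB_def x_def by auto
qed

lemma fB_le_powr:
  assumes "0 < q" "q < 1" "0 < t"
  shows "fB q t k m \<le> t * q powr real_of_int m"
proof -
  have "fB q t k m \<le> t * q powr (1/2 + real k + real_of_int m)" by (rule fB_le(2)[OF assms(1,3)])
  also have "\<dots> \<le> t * q powr real_of_int m"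
    using assms by (intro mult_left_mono powr_mono') auto
  finally show ?thesis .
qed

lemma gauss_exponent_bound:
  fixes m :: int and N :: nat
  assumes N: "0 < N" and m: "0 \<le> m"
  defines "p \<equiv> nat m div N + 1"
  shows "real_of_int m ^ 2 / (2 * real N) + real_of_int m / 2 - real N / 2
    \<le> real_of_int m - real N * real p ^ 2 / 2 + (real p - 1/2) * real_of_int m"
proof -
  have "N * (nat m div N) + nat m mod N = nat m" "nat m mod N < N"
    using N by (simp_all add: mult_div_mod_eq)
  moreover have "N * p = N * (nat m div N) + N" unfolding p_def by simp
  ultimately have "nat m \<le> N * p" "N * p \<le> nat m + N" by linarith+
  hence "real (nat m) \<le> real N * real p" "real N * real p \<le> real (nat m) + real N"
    by (simp_all only: of_nat_mult[symmetric] of_nat_add[symmetric] of_nat_le_iff)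
  hence "(real N * real p - real_of_int m)\<^sup>2 \<le> (real N)\<^sup>2"
    using m by (intro power_mono) auto
  moreover have "(real_of_int m - real N * real p ^ 2 / 2 + (real p - 1/2) * real_of_int m
      - (real_of_int m ^ 2 / (2 * real N) + real_of_int m / 2 - real N / 2)) * (2 * real N)
      = (real N)\<^sup>2 - (real N * real p - real_of_int m)\<^sup>2"
    using N by (simp add: field_simps power2_eq_square)
  ultimately have "0 \<le> (real_of_int m - real N * real p ^ 2 / 2 + (real p - 1/2) * real_of_int m
      - (real_of_int m ^ 2 / (2 * real N) + real_of_int m / 2 - real N / 2)) * (2 * real N)"
    by simp
  thus ?thesis using N by (simp add: zero_le_mult_iff)
qed

lemma residue_exponent_bound:
  fixes m \<epsilon> :: real and N u :: nat
  assumes "0 < N"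
  shows "- (\<epsilon>\<^sup>2 * real N / 2) - m\<^sup>2 / (2 * real N) + \<epsilon> * m - (1/2 + \<epsilon>) * real u
    \<le> - real u * m - real u + (-1/2 + \<epsilon>) * (real u * real N - real u) + real N * real u * (real u + 1) / 2"
proof -
  have "(- real u * m - real u + (-1/2 + \<epsilon>) * (real u * real N - real u) + real N * real u * (real u + 1) / 2
      - (- (\<epsilon>\<^sup>2 * real N / 2) - m\<^sup>2 / (2 * real N) + \<epsilon> * m - (1/2 + \<epsilon>) * real u)) * (2 * real N)
      = (real N * real u - m + \<epsilon> * real N)\<^sup>2"
    using assms by (simp add: field_simps power2_eq_square)
  hence "0 \<le> (- real u * m - real u + (-1/2 + \<epsilon>) * (real u * real N - real u) + real N * real u * (real u + 1) / 2
      - (- (\<epsilon>\<^sup>2 * real N / 2) - m\<^sup>2 / (2 * real N) + \<epsilon> * m - (1/2 + \<epsilon>) * real u)) * (2 * real N)"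
    by simp
  thus ?thesis using assms by (simp add: zero_le_mult_iff)
qed

section \<open>The contour integral A(m;r)\<close>

locale kernel_setting =
  fixes q \<epsilon> :: real and N :: nat and a b :: "nat \<Rightarrow> real"
  assumes q: "0 < q" "q < 1"
    and N: "N \<ge> 1"
    and a_dec: "\<And>i j. 1 \<le> i \<Longrightarrow> i < j \<Longrightarrow> j \<le> N \<Longrightarrow> a j < a i"
    and a_range: "\<And>i. 1 \<le> i \<Longrightarrow> i \<le> N \<Longrightarrow> 0 < a i \<and> a i < 1"
    and b_range: "\<And>i. 1 \<le> i \<Longrightarrow> i \<le> N \<Longrightarrow> 0 < b i \<and> b i < 1"
    and eps: "0 < \<epsilon>" "\<epsilon> < 1/2"
    and ratio: "a 1 / a N < q powr (-1/2 + \<epsilon>)"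
begin

definition bmax :: real where "bmax = Max (b ` {1..N})"

lemma bmax: "0 < bmax" "bmax < 1" "\<And>i. i \<in> {1..N} \<Longrightarrow> b i \<le> bmax"
proof -
  have "bmax \<in> b ` {1..N}" unfolding bmax_def using N by (intro Max_in) auto
  thus "0 < bmax" "bmax < 1" using b_range by auto
  show "\<And>i. i \<in> {1..N} \<Longrightarrow> b i \<le> bmax" unfolding bmax_def by simp
qed

lemma a_pos: "i \<in> {1..N} \<Longrightarrow> 0 < a i" and a_lt1: "i \<in> {1..N} \<Longrightarrow> a i < 1"
  using a_range by auto

lemma a_le_a1: "i \<in> {1..N} \<Longrightarrow> a i \<le> a 1"
  using a_dec[of 1 i] by (cases "i = 1") auto

lemma a_ge_aN: "i \<in> {1..N} \<Longrightarrow> a N \<le> a i"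
  using a_dec[of i N] by (cases "i = N") auto

lemma a1: "0 < a 1" "a 1 < 1" and aN: "0 < a N"
  using a_range[of 1] a_range[of N] N by auto

lemma inj_on_a: "inj_on a {1..N}"
proof (rule inj_onI, rule ccontr)
  fix i j assume "i \<in> {1..N}" "j \<in> {1..N}" "a i = a j" "i \<noteq> j"
  thus False using a_dec[of i j] a_dec[of j i] by (cases "i < j") auto
qed

lemma jidx_in: "r > 0 \<Longrightarrow> jidx N r \<in> {1..N}"
  using N unfolding jidx_def by (auto simp: Suc_le_eq)

lemma atil_pos: "r > 0 \<Longrightarrow> 0 < atil q N a r"
  using jidx_in a_pos q by (simp add: atil_def)

lemma atil_le: "r > 0 \<Longrightarrow> atil q N a r \<le> a 1 * q ^ uidx N r"
  using jidx_in a_le_a1 q by (simp add: atil_def mult_right_mono)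

lemma atil_le_q_pow:
  assumes "r > 0"
  shows "atil q N a r \<le> q ^ uidx N r"
proof -
  have "a 1 * q ^ uidx N r \<le> q ^ uidx N r"
    using a1 q by (intro mult_left_le_one_le) auto
  thus ?thesis using atil_le[OF assms] by linarith
qed

lemma atil_le_a1:
  assumes "r > 0"
  shows "atil q N a r \<le> a 1"
proof -
  have "a 1 * q ^ uidx N r \<le> a 1" using a1 q by (intro mult_left_le) (auto simp: power_le_one)
  thus ?thesis using atil_le[OF assms] by linarith
qed

lemma atil_lt1: "r > 0 \<Longrightarrow> atil q N a r < 1"
  using atil_le_a1[of r] a1 by linarith

definition A_prod :: "complex \<Rightarrow> complex" where
  "A_prod z = (\<Prod>i\<in>{1..N}. qpoch (complex_of_real (a i) * z) q / qpoch (complex_of_real (b i) / z) q)"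

definition A_domain :: "complex set" where "A_domain = {z. bmax < norm z}"

lemma open_A_domain: "open A_domain"
  unfolding A_domain_def by (intro open_Collect_less continuous_intros)

lemma A_domain_nonzero: "z \<in> A_domain \<Longrightarrow> z \<noteq> 0"
  using bmax unfolding A_domain_def by auto

lemma holomorphic_A_prod: "A_prod holomorphic_on A_domain"
  unfolding A_prod_def
proof (intro holomorphic_on_prod holomorphic_on_divide)
  fix i assume i: "i \<in> {1..N}"
  show "(\<lambda>z. qpoch (complex_of_real (a i) * z) q) holomorphic_on A_domain"
    by (intro holomorphic_on_qpoch_compose q holomorphic_intros)
  show "(\<lambda>z. qpoch (complex_of_real (b i) / z) q) holomorphic_on A_domain"
    using A_domain_nonzero by (intro holomorphic_on_qpoch_compose q holomorphic_intros) auto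
  show "qpoch (complex_of_real (b i) / z) q \<noteq> 0" if z: "z \<in> A_domain" for z
  proof (rule qpoch_nonzero[OF q])
    fix j :: nat
    have "norm (complex_of_real (b i) / z * complex_of_real (q ^ j)) = b i / norm z * q ^ j"
      using b_range[of i] i q by (simp add: norm_mult norm_divide norm_power)
    also have "\<dots> \<le> b i / norm z" using q b_range[of i] i A_domain_nonzero[OF z]
      by (intro mult_left_le) (auto simp: power_le_one)
    also have "\<dots> < 1"
      using z bmax(3)[OF i] b_range[of i] i unfolding A_domain_def by (simp add: divide_less_eq)
    finally show "complex_of_real (b i) / z * complex_of_real (q ^ j) \<noteq> 1" by auto
  qed
qed

lemma A_prod_pole_eq_0:
  assumes r: "r > 0"
  shows "A_prod (complex_of_real (1 / atil q N a r)) = 0"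
proof -
  define j where "j = jidx N r"
  have j: "j \<in> {1..N}" unfolding j_def by (rule jidx_in[OF r])
  have "a j * (1 / atil q N a r) * q ^ uidx N r = 1"
    using atil_pos[OF r] q a_pos[OF j] by (simp add: atil_def j_def)
  hence "complex_of_real (a j) * complex_of_real (1 / atil q N a r) * complex_of_real (q ^ uidx N r) = 1"
    by (metis of_real_1 of_real_mult)
  hence "qpoch (complex_of_real (a j) * complex_of_real (1 / atil q N a r)) q = 0"
    by (rule qpoch_eq_0I[OF q])
  thus ?thesis unfolding A_prod_def using j by (intro prod_zero) (auto intro!: bexI[of _ j])
qed

definition A_integrand :: "nat \<Rightarrow> int \<Rightarrow> complex \<Rightarrow> complex" where
  "A_integrand r m z = 1 / z powi (1 + m) * (1 / (z - complex_of_real (1 / atil q N a r))) * A_prod z"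

lemma Aker_eq_A_integrand:
  "Aker q N a b t k m r =
     complex_of_real (fB q t k m) * (1 / (2 * pi * \<i>)) * contour_integral (circlepath 0 1) (A_integrand r m)"
  unfolding Aker_def A_integrand_def A_prod_def ..

lemma holomorphic_A_integrand:
  "A_integrand r m holomorphic_on A_domain - {complex_of_real (1 / atil q N a r)}"
  unfolding A_integrand_def using A_domain_nonzero
  by (intro holomorphic_intros holomorphic_on_subset[OF holomorphic_A_prod]) auto

text \<open>The zero of the numerator at the pole cancels it, so the contour may cross the pole.\<close>
lemma contour_integral_A_integrand_radius_eq:
  assumes r: "r > 0" and R: "bmax < R" "R \<noteq> 1 / atil q N a r"
  shows "contour_integral (circlepath 0 1) (A_integrand r m) = contour_integral (circlepath 0 R) (A_integrand r m)"
proof -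
  define c where "c = complex_of_real (1 / atil q N a r)"
  define g where "g z = A_prod z / z powi (1 + m)" for z
  have g_holo: "g holomorphic_on A_domain"
    unfolding g_def using A_domain_nonzero
    by (intro holomorphic_on_divide holomorphic_A_prod holomorphic_intros) (auto simp: power_int_eq_0_iff)
  have nc: "norm c = 1 / atil q N a r" unfolding c_def using atil_pos[OF r] by (simp only: norm_of_real) simp
  hence c1: "1 < norm c" using atil_pos[OF r] atil_lt1[OF r] by (simp add: less_divide_eq)
  hence cS: "c \<in> A_domain" using bmax unfolding A_domain_def by simp
  have Ac: "A_prod c = 0" unfolding c_def by (rule A_prod_pole_eq_0[OF r])
  hence g0: "g c = 0" unfolding g_def by simp
  have integrand: "A_integrand r m z = 1 / z powi (1 + m) * (1 / (z - c)) * A_prod z" for z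
    unfolding A_integrand_def c_def ..
  define G where "G z = (if z = c then deriv g c else (g z - g c) / (z - c))" for z
  have G_holo: "G holomorphic_on A_domain"
    unfolding G_def[abs_def] using open_A_domain cS
    by (intro pole_lemma g_holo) (simp add: interior_open[OF open_A_domain])
  have G_eq: "A_integrand r m z = G z" if "norm z \<noteq> 1 / atil q N a r" for z
  proof -
    have "z \<noteq> c" using that nc by auto
    thus ?thesis by (simp add: integrand G_def g0 g_def Ac divide_inverse mult_ac)
  qed
  have "contour_integral (circlepath 0 1) (A_integrand r m) = contour_integral (circlepath 0 1) G"
    by (intro contour_integral_eq G_eq) (use c1 nc in auto)
  also have "\<dots> = contour_integral (circlepath 0 R) G"
    using bmax R by (intro contour_integral_circlepath_radius_eq[OF open_A_domain G_holo])
      (auto simp: A_domain_def)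
  also have "\<dots> = contour_integral (circlepath 0 R) (A_integrand r m)"
    by (intro contour_integral_eq G_eq[symmetric]) (use R bmax in auto)
  finally show ?thesis .
qed

lemma norm_A_integrand_le_circle:
  assumes r: "r > 0" and R: "bmax < R" "R \<noteq> 1 / atil q N a r"
    and M: "norm (A_prod z) \<le> M" and z: "norm z = R"
  shows "norm (A_integrand r m z) \<le> M / (R powr (1 + real_of_int m) * \<bar>R - 1 / atil q N a r\<bar>)"
proof -
  define c where "c = 1 / atil q N a r"
  have R0: "0 < R" using R bmax by linarith
  have c0: "0 < c" unfolding c_def using atil_pos[OF r] by simp
  have "\<bar>R - c\<bar> \<le> norm (z - complex_of_real c)"
    using z norm_triangle_ineq3[of z "complex_of_real c"] c0 by simp
  moreover have "norm (z powi (1 + m)) = R powr (1 + real_of_int m)"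
    using z R0 powr_real_of_int'[of R "1 + m"] by (simp add: norm_power_int)
  ultimately have "norm (A_integrand r m z)
      = norm (A_prod z) / (R powr (1 + real_of_int m) * norm (z - complex_of_real c))"
    unfolding A_integrand_def c_def by (simp add: norm_mult norm_divide)
  also have "\<dots> \<le> M / (R powr (1 + real_of_int m) * \<bar>R - c\<bar>)"
    using M z R0 R(2) \<open>\<bar>R - c\<bar> \<le> norm (z - complex_of_real c)\<close> order_trans[OF norm_ge_zero M]
    unfolding c_def by (intro frac_le mult_left_mono mult_pos_pos) auto
  finally show ?thesis unfolding c_def .
qed

lemma norm_Aker_le_circle:
  assumes r: "r > 0" and t: "t > 0" and R: "bmax < R" "R \<noteq> 1 / atil q N a r"
    and M: "\<And>z. norm z = R \<Longrightarrow> norm (A_prod z) \<le> M"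
  shows "norm (Aker q N a b t k m r) \<le> fB q t k m * M * R powr (- real_of_int m) / \<bar>R - 1 / atil q N a r\<bar>"
proof -
  define d where "d = \<bar>R - 1 / atil q N a r\<bar>"
  define B where "B = M / (R powr (1 + real_of_int m) * d)"
  have R0: "0 < R" using R bmax by linarith
  have d0: "0 < d" unfolding d_def using R by simp
  have M0: "0 \<le> M" using order_trans[OF norm_ge_zero M[of "complex_of_real R"]] R0 by simp
  have B0: "0 \<le> B" unfolding B_def using M0 d0 R0 by simp
  have "norm (complex_of_real (1 / atil q N a r)) = 1 / atil q N a r"
    using atil_pos[OF r] by (simp only: norm_of_real) simp
  hence "path_image (circlepath 0 R) \<subseteq> A_domain - {complex_of_real (1 / atil q N a r)}"
    using R R0 by (auto simp: A_domain_def)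
  moreover have "open (A_domain - {complex_of_real (1 / atil q N a r)})"
    using open_A_domain by (intro open_Diff) auto
  ultimately have "A_integrand r m contour_integrable_on circlepath 0 R"
    by (intro contour_integrable_holomorphic_simple[OF holomorphic_A_integrand]) auto
  hence ib: "norm (contour_integral (circlepath 0 R) (A_integrand r m)) \<le> B * (2 * pi * R)"
    using norm_A_integrand_le_circle[OF r R M] unfolding B_def d_def
    by (intro has_contour_integral_bound_circlepath[OF has_contour_integral_integral B0[unfolded B_def d_def] R0]) auto
  have "norm (Aker q N a b t k m r)
      = fB q t k m * (1 / (2 * pi)) * norm (contour_integral (circlepath 0 R) (A_integrand r m))"
    unfolding Aker_eq_A_integrand contour_integral_A_integrand_radius_eq[OF r R]
    using fB_nonneg[OF q(1) t] by (simp add: norm_mult norm_divide)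
  also have "\<dots> \<le> fB q t k m * (1 / (2 * pi)) * (B * (2 * pi * R))"
    using fB_nonneg[OF q(1) t] by (intro mult_left_mono ib) auto
  also have "\<dots> = fB q t k m * M * (R / R powr (1 + real_of_int m)) / d"
    unfolding B_def using d0 R0 by (simp add: field_simps)
  also have "R / R powr (1 + real_of_int m) = R powr (- real_of_int m)"
    using R0 by (simp add: powr_add powr_minus field_simps)
  finally show ?thesis unfolding d_def .
qed

lemma norm_A_prod_le:
  assumes R: "bmax < R" and X: "a 1 * R \<le> X"
    and U: "\<And>x. norm x \<le> X \<Longrightarrow> norm (qpoch x q) \<le> U"
    and z: "norm z = R" and \<beta>: "bmax / R \<le> \<beta>" "\<beta> < 1"
  shows "norm (A_prod z) \<le> (U / exp (- \<beta> / ((1 - \<beta>) * (1 - q)))) ^ N"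
proof -
  define L where "L = exp (- \<beta> / ((1 - \<beta>) * (1 - q)))"
  have R0: "0 < R" using R bmax by linarith
  have "norm (0::complex) \<le> X" using X a1 R0 by (simp add: order_trans[OF _ X])
  hence U0: "0 \<le> U" using U order_trans[OF norm_ge_zero] by blast
  have "norm (A_prod z) = (\<Prod>i\<in>{1..N}.
      norm (qpoch (complex_of_real (a i) * z) q) / norm (qpoch (complex_of_real (b i) / z) q))"
    unfolding A_prod_def by (simp add: prod_norm[symmetric] norm_divide)
  also have "\<dots> \<le> (\<Prod>i\<in>{1..N}. U / L)"
  proof (rule prod_mono)
    fix i assume i: "i \<in> {1..N}"
    have "norm (complex_of_real (a i) * z) = a i * R"
      using a_pos[OF i] z by (simp add: norm_mult)
    also have "\<dots> \<le> a 1 * R" using a_le_a1[OF i] R0 by (simp add: mult_right_mono)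
    finally have u: "norm (qpoch (complex_of_real (a i) * z) q) \<le> U" using X U by auto
    have "norm (complex_of_real (b i) / z) = b i / R"
      using b_range[of i] i z by (simp add: norm_divide)
    also have "\<dots> \<le> bmax / R" using bmax(3)[OF i] R0 by (simp add: divide_right_mono)
    finally have l: "L \<le> norm (qpoch (complex_of_real (b i) / z) q)"
      unfolding L_def using \<beta> by (intro norm_qpoch_ge_exp[OF q]) auto
    have "0 < L" unfolding L_def by simp
    thus "0 \<le> norm (qpoch (complex_of_real (a i) * z) q) / norm (qpoch (complex_of_real (b i) / z) q) \<and>
          norm (qpoch (complex_of_real (a i) * z) q) / norm (qpoch (complex_of_real (b i) / z) q) \<le> U / L"
      using u l U0 by (auto intro: frac_le)
  qed
  also have "\<dots> = (U / L) ^ N" by simp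
  finally show ?thesis unfolding L_def .
qed

lemma inverse_pole_gap_le_small_radius:
  assumes r: "r > 0" and R: "0 < R" "R \<le> 1"
  shows "1 / \<bar>R - 1 / atil q N a r\<bar> \<le> q ^ uidx N r / (1 - a 1)"
proof -
  define c where "c = 1 / atil q N a r"
  have at: "0 < atil q N a r" "atil q N a r \<le> a 1"
    using atil_pos[OF r] atil_le_a1[OF r] by auto
  have "1 \<le> c * a 1" unfolding c_def using at by (simp add: le_divide_eq)
  hence "c * (1 - a 1) \<le> \<bar>R - c\<bar>" using R by (simp add: algebra_simps)
  moreover have "0 < c * (1 - a 1)" unfolding c_def using at a1 by simp
  ultimately have "1 / \<bar>R - c\<bar> \<le> 1 / (c * (1 - a 1))" by (intro frac_le) auto
  also have "\<dots> = atil q N a r / (1 - a 1)" unfolding c_def by simp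
  also have "\<dots> \<le> q ^ uidx N r / (1 - a 1)"
    using atil_le_q_pow[OF r] a1 by (intro divide_right_mono) auto
  finally show ?thesis unfolding c_def .
qed

lemma norm_Aker_le_neg:
  assumes r: "r > 0" and t: "t > 0" and b': "bmax < b'" "b' < 1"
  shows "norm (Aker q N a b t k m r) \<le>
    (exp (1 / (1 - q)) / exp (- (bmax / b') / ((1 - bmax / b') * (1 - q)))) ^ N / (1 - a 1) *
      b' powr (- real_of_int m) * q ^ uidx N r"
proof -
  define M where "M = (exp (1 / (1 - q)) / exp (- (bmax / b') / ((1 - bmax / b') * (1 - q)))) ^ N"
  have b'0: "0 < b'" using b' bmax by linarith
  have M: "norm (A_prod z) \<le> M" if "norm z = b'" for z
    unfolding M_def
  proof (rule norm_A_prod_le[OF b'(1) _ _ that])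
    show "a 1 * b' \<le> 1" using a1 b' b'0 by (simp add: mult_le_one)
    show "bmax / b' < 1" using b' b'0 by (simp add: divide_less_eq)
  qed (use norm_qpoch_le_exp[OF q] in auto)
  have "b' \<noteq> 1 / atil q N a r"
    using b' atil_pos[OF r] atil_lt1[OF r] by (auto simp: divide_less_eq)
  hence "norm (Aker q N a b t k m r) \<le> fB q t k m * M * b' powr (- real_of_int m) / \<bar>b' - 1 / atil q N a r\<bar>"
    by (rule norm_Aker_le_circle[OF r t b'(1) _ M])
  also have "\<dots> = fB q t k m * (M * b' powr (- real_of_int m)) * (1 / \<bar>b' - 1 / atil q N a r\<bar>)"
    by simp
  also have "\<dots> \<le> 1 * (M * b' powr (- real_of_int m)) * (q ^ uidx N r / (1 - a 1))"
    using fB_le(1)[OF q(1) t] fB_nonneg[OF q(1) t]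
      inverse_pole_gap_le_small_radius[OF r b'0 less_imp_le[OF b'(2)]]
    unfolding M_def by (intro mult_mono) auto
  finally show ?thesis unfolding M_def by simp
qed

definition hq :: real where "hq = q powr (1/2)"

lemma hq: "0 < hq" "hq < 1" "hq\<^sup>2 = q"
  unfolding hq_def using q powr_less_mono2[of "1/2" q 1] by (auto simp: powr_half_sqrt)

lemma hq_power: "hq ^ n = q powr (real n / 2)"
  using hq q by (simp add: hq_def powr_realpow[symmetric] powr_powr)

definition kappa :: real where "kappa = min (1 - q powr \<epsilon>) (1 - hq)"

lemma kappa_pos: "0 < kappa"
  unfolding kappa_def using hq q eps powr_less_mono2[of \<epsilon> q 1] by auto

lemma ratio_hq: "a 1 < a N * q powr \<epsilon> / hq"
proof -
  have "q powr (-1/2 + \<epsilon>) = q powr \<epsilon> * q powr (-(1/2))"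
    by (simp add: powr_add[symmetric])
  also have "q powr (-(1/2)) = 1 / hq" unfolding hq_def by (rule powr_minus_divide)
  finally show ?thesis using ratio aN by (simp add: divide_less_eq mult.commute)
qed

definition gauss_radius :: "nat \<Rightarrow> real" where
  "gauss_radius p = hq / (a 1 * hq ^ (2 * p))"

lemma gauss_radius_gt1:
  assumes "1 \<le> p"
  shows "1 < gauss_radius p"
proof -
  have "hq ^ (2 * p) \<le> hq" using power_decreasing[of 1 "2 * p" hq] hq assms by simp
  moreover have "a 1 * hq ^ (2 * p) < 1 * hq ^ (2 * p)" using a1 hq by (intro mult_strict_right_mono) auto
  moreover have "0 < a 1 * hq ^ (2 * p)" using a1 hq by simp
  ultimately show ?thesis unfolding gauss_radius_def by (simp add: less_divide_eq)
qed

lemma atil_eq_hq_power: "atil q N a r = a (jidx N r) * hq ^ (2 * uidx N r)"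
  unfolding atil_def by (simp add: power_mult hq)

lemma pole_gap_inside_gauss_radius:
  assumes r: "r > 0" and p: "uidx N r + 1 \<le> p"
  shows "kappa / q ^ uidx N r \<le> \<bar>gauss_radius p - 1 / atil q N a r\<bar>"
proof -
  define u where "u = uidx N r"
  define j where "j = jidx N r"
  define R where "R = gauss_radius p"
  define \<rho> where "\<rho> = q powr \<epsilon>"
  have j: "j \<in> {1..N}" unfolding j_def by (rule jidx_in[OF r])
  have \<rho>: "0 < \<rho>" "\<rho> < 1" unfolding \<rho>_def using q eps powr_less_mono2[of \<epsilon> q 1] by auto
  have at: "0 < atil q N a r" using atil_pos[OF r] .
  have "hq ^ (2 * p) \<le> hq ^ Suc (2 * u + 1)"
    using p hq unfolding u_def by (intro power_decreasing) auto
  hence "a 1 * hq ^ (2 * p) \<le> a 1 * hq * hq ^ (2 * u + 1)"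
    using mult_left_mono[of _ _ "a 1"] a1 by (simp add: mult.assoc)
  also have "\<dots> \<le> (a N * \<rho> / hq) * hq * hq ^ (2 * u + 1)"
    using ratio_hq hq unfolding \<rho>_def by (intro mult_right_mono) auto
  also have "\<dots> = a N * \<rho> * hq * hq ^ (2 * u)" using hq by (simp add: field_simps)
  also have "\<dots> \<le> a j * \<rho> * hq * hq ^ (2 * u)"
    using a_ge_aN[OF j] \<rho> hq by (intro mult_right_mono) auto
  finally have "a 1 * hq ^ (2 * p) \<le> \<rho> * hq * atil q N a r"
    unfolding atil_eq_hq_power u_def j_def by (simp add: mult_ac)
  hence pole: "1 / atil q N a r \<le> R * \<rho>"
    unfolding R_def gauss_radius_def using at a1 hq \<rho> by (simp add: field_simps)
  have "1 / R = a 1 * hq ^ (2 * p) / hq" unfolding R_def gauss_radius_def using hq a1 by simp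
  also have "\<dots> \<le> hq ^ (2 * p) / hq" using a1 hq by (intro divide_right_mono mult_left_le_one_le) auto
  also have "\<dots> = hq ^ (2 * p - 1)" using hq p by (simp add: power_diff)
  also have "\<dots> \<le> hq ^ (2 * u)" using hq p unfolding u_def by (intro power_decreasing) auto
  also have "\<dots> = q ^ u" by (simp add: power_mult hq)
  finally have "1 / q ^ u \<le> R"
    using gauss_radius_gt1[of p] p q unfolding R_def by (simp add: divide_le_eq mult.commute)
  hence "(1 / q ^ u) * kappa \<le> R * (1 - \<rho>)"
    using kappa_pos gauss_radius_gt1[of p] p unfolding kappa_def \<rho>_def R_def by (intro mult_mono) auto
  also have "\<dots> \<le> \<bar>R - 1 / atil q N a r\<bar>" using pole by (simp add: algebra_simps)
  finally show ?thesis unfolding u_def R_def by simp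
qed

lemma pole_gap_outside_gauss_radius:
  assumes r: "r > 0" and p: "p \<le> uidx N r"
  shows "kappa / q ^ uidx N r \<le> \<bar>gauss_radius p - 1 / atil q N a r\<bar>"
proof -
  define c where "c = 1 / atil q N a r"
  have j: "jidx N r \<in> {1..N}" by (rule jidx_in[OF r])
  have at: "0 < atil q N a r" using atil_pos[OF r] .
  have "atil q N a r \<le> a 1 * hq ^ (2 * p)"
    unfolding atil_eq_hq_power using p a_pos[OF j] a_le_a1[OF j] hq
    by (intro mult_mono power_decreasing) auto
  hence pole: "gauss_radius p \<le> hq * c"
    unfolding c_def gauss_radius_def using at a1 hq by (simp add: field_simps)
  have "1 / q ^ uidx N r \<le> c" unfolding c_def using at atil_le_q_pow[OF r] by (intro frac_le) auto
  hence "(1 / q ^ uidx N r) * kappa \<le> c * (1 - hq)"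
    using kappa_pos at unfolding c_def kappa_def by (intro mult_mono) auto
  also have "\<dots> \<le> \<bar>gauss_radius p - c\<bar>" using pole by (simp add: algebra_simps)
  finally show ?thesis unfolding c_def by simp
qed

text \<open>Whether the pole 1/atil lies inside or outside the circle, the ratio hypothesis keeps it at
  distance of order q^(-u) from it.\<close>
lemma pole_gap_ge_gauss_radius:
  assumes "r > 0" "1 \<le> p"
  shows "kappa / q ^ uidx N r \<le> \<bar>gauss_radius p - 1 / atil q N a r\<bar>"
  using pole_gap_inside_gauss_radius[OF assms(1)] pole_gap_outside_gauss_radius[OF assms(1)]
  by (cases "uidx N r + 1 \<le> p") auto

lemma inverse_pole_gap_le_gauss_radius:
  assumes "r > 0" "1 \<le> p"
  shows "gauss_radius p \<noteq> 1 / atil q N a r"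
    "1 / \<bar>gauss_radius p - 1 / atil q N a r\<bar> \<le> q powr real (uidx N r) / kappa"
proof -
  have gap: "kappa / q ^ uidx N r \<le> \<bar>gauss_radius p - 1 / atil q N a r\<bar>"
    by (rule pole_gap_ge_gauss_radius[OF assms])
  moreover have "0 < kappa / q ^ uidx N r" using kappa_pos q by simp
  ultimately show "gauss_radius p \<noteq> 1 / atil q N a r" by auto
  have "inverse \<bar>gauss_radius p - 1 / atil q N a r\<bar> \<le> inverse (kappa / q ^ uidx N r)"
    using gap kappa_pos q by (intro le_imp_inverse_le) auto
  thus "1 / \<bar>gauss_radius p - 1 / atil q N a r\<bar> \<le> q powr real (uidx N r) / kappa"
    using q by (simp add: powr_realpow divide_inverse mult.commute)
qed

definition gauss_const :: real where
  "gauss_const = exp (hq / (1 - hq\<^sup>2)) ^ 2 / exp (- bmax / ((1 - bmax) * (1 - q)))"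

lemma gauss_const_pos: "0 < gauss_const"
  unfolding gauss_const_def by simp

lemma norm_A_prod_le_gauss_radius:
  assumes p: "1 \<le> p" and z: "norm z = gauss_radius p"
  shows "norm (A_prod z) \<le> gauss_const ^ N * q powr (- (real N * real p ^ 2 / 2))"
proof -
  define K where "K = exp (hq / (1 - hq\<^sup>2)) ^ 2"
  define L where "L = exp (- bmax / ((1 - bmax) * (1 - q)))"
  have R: "bmax < gauss_radius p" using gauss_radius_gt1[OF p] bmax by linarith
  have U: "norm (qpoch x q) \<le> K / hq ^ (p\<^sup>2)" if "norm x \<le> hq / hq ^ (2 * p)" for x
    using norm_qpoch_le_gaussian[OF hq(1,2) that] unfolding K_def hq(3) .
  have "norm (A_prod z) \<le> (K / hq ^ (p\<^sup>2) / L) ^ N"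
    unfolding L_def
  proof (rule norm_A_prod_le[OF R _ U z])
    show "a 1 * gauss_radius p \<le> hq / hq ^ (2 * p)" unfolding gauss_radius_def using a1 by simp
    show "bmax / gauss_radius p \<le> bmax" using bmax gauss_radius_gt1[OF p] by (simp add: divide_le_eq)
    show "bmax < 1" by (rule bmax(2))
  qed
  also have "(K / hq ^ (p\<^sup>2) / L) ^ N = gauss_const ^ N * q powr (- (real N * real p ^ 2 / 2))"
  proof -
    have "K / hq ^ (p\<^sup>2) / L = gauss_const / q powr (real p ^ 2 / 2)"
      unfolding gauss_const_def K_def L_def hq_power by simp
    thus ?thesis using q by (simp add: power_divide powr_power powr_minus_divide)
  qed
  finally show ?thesis .
qed

lemma gauss_radius_powr:
  "gauss_radius p powr (- real_of_int m) = a 1 powr real_of_int m * q powr ((real p - 1/2) * real_of_int m)"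
proof -
  have "gauss_radius p = 1 / (a 1 * (q powr real p / hq))"
    unfolding gauss_radius_def using hq a1 hq_power[of "2 * p"] by (simp add: field_simps)
  also have "q powr real p / hq = q powr (real p - 1/2)" unfolding hq_def by (simp add: powr_diff)
  finally have "gauss_radius p powr (- real_of_int m) = (a 1 * q powr (real p - 1/2)) powr real_of_int m"
    using a1 q by (simp add: powr_divide powr_minus_divide)
  also have "\<dots> = a 1 powr real_of_int m * q powr ((real p - 1/2) * real_of_int m)"
    using a1 q by (simp add: powr_mult powr_powr)
  finally show ?thesis .
qed

lemma norm_Aker_le_pos:
  assumes r: "r > 0" and t: "t > 0" and m: "0 \<le> m"
  shows "norm (Aker q N a b t k m r) \<le> (t * gauss_const ^ N / kappa * q powr (- real N / 2)) *
     a 1 powr real_of_int m * q powr (real_of_int m ^ 2 / (2 * real N) + real_of_int m / 2 + real (uidx N r))"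
proof -
  define p where "p = nat m div N + 1"
  define R where "R = gauss_radius p"
  define u where "u = uidx N r"
  define E where "E = real_of_int m - real N * real p ^ 2 / 2 + (real p - 1/2) * real_of_int m + real u"
  have p: "1 \<le> p" unfolding p_def by simp
  have qE: "q powr E = q powr real_of_int m * q powr (- (real N * real p ^ 2 / 2)) *
      q powr ((real p - 1/2) * real_of_int m) * q powr real u"
    unfolding E_def by (simp only: powr_add diff_conv_add_uminus)
  have "norm (Aker q N a b t k m r) \<le>
      fB q t k m * (gauss_const ^ N * q powr (- (real N * real p ^ 2 / 2))) * R powr (- real_of_int m)
        / \<bar>R - 1 / atil q N a r\<bar>"
    using gauss_radius_gt1[OF p] bmax inverse_pole_gap_le_gauss_radius(1)[OF r p] unfolding R_def
    by (intro norm_Aker_le_circle[OF r t] norm_A_prod_le_gauss_radius[OF p]) auto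
  also have "\<dots> = fB q t k m * (gauss_const ^ N * q powr (- (real N * real p ^ 2 / 2))) *
      (a 1 powr real_of_int m * q powr ((real p - 1/2) * real_of_int m)) * (1 / \<bar>R - 1 / atil q N a r\<bar>)"
    unfolding R_def gauss_radius_powr by simp
  also have "\<dots> \<le> (t * q powr real_of_int m) * (gauss_const ^ N * q powr (- (real N * real p ^ 2 / 2))) *
      (a 1 powr real_of_int m * q powr ((real p - 1/2) * real_of_int m)) * (q powr real u / kappa)"
  proof (intro mult_mono mult_nonneg_nonneg)
    show "fB q t k m \<le> t * q powr real_of_int m" by (rule fB_le_powr[OF q t])
    show "1 / \<bar>R - 1 / atil q N a r\<bar> \<le> q powr real u / kappa"
      unfolding R_def u_def by (rule inverse_pole_gap_le_gauss_radius(2)[OF r p])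
  qed (use t q gauss_const_pos kappa_pos in auto)
  also have "\<dots> = (t * gauss_const ^ N / kappa) * a 1 powr real_of_int m *
      (q powr real_of_int m * q powr (- (real N * real p ^ 2 / 2)) *
        q powr ((real p - 1/2) * real_of_int m) * q powr real u)"
    by (simp add: ac_simps)
  also have "\<dots> = (t * gauss_const ^ N / kappa) * a 1 powr real_of_int m * q powr E"
    by (simp only: qE)
  also have "\<dots> \<le> (t * gauss_const ^ N / kappa) * a 1 powr real_of_int m *
      (q powr (- real N / 2) * q powr (real_of_int m ^ 2 / (2 * real N) + real_of_int m / 2 + real u))"
  proof (rule mult_left_mono)
    have "- real N / 2 + (real_of_int m ^ 2 / (2 * real N) + real_of_int m / 2 + real u) \<le> E"
      using gauss_exponent_bound[of N m, folded p_def] N m unfolding E_def by simp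
    thus "q powr E \<le> q powr (- real N / 2) *
        q powr (real_of_int m ^ 2 / (2 * real N) + real_of_int m / 2 + real u)"
      using q by (simp add: powr_add[symmetric] powr_mono')
  qed (use t gauss_const_pos kappa_pos in simp)
  finally show ?thesis unfolding u_def by (simp add: ac_simps)
qed

section \<open>The residue B(r;m)\<close>

definition \<Gamma> :: real where "\<Gamma> = (1 + hq) / 2"

definition LG :: real where "LG = exp (- \<Gamma> / ((1 - \<Gamma>) * (1 - q)))"

definition residue_const :: "real \<Rightarrow> real" where
  "residue_const \<delta>1 = exp (2 / (1 - q)) ^ N / (((1/2) * LG\<^sup>2) ^ N * (\<delta>1 / 2) ^ (N - 1))"

lemma \<Gamma>: "0 < \<Gamma>" "\<Gamma> < 1" unfolding \<Gamma>_def using hq by auto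

lemma LG_pos: "0 < LG" unfolding LG_def by simp

lemma one_minus_Gamma_power_nonneg: "0 \<le> 1 - \<Gamma> * q ^ k"
  using \<Gamma> q mult_le_one[of \<Gamma> "q ^ k"] by (simp add: power_le_one)

lemma hq_le_Gamma: "hq * (1 + (1 - hq) / 2) \<le> \<Gamma>" "hq / ((1 + hq) / 2) \<le> \<Gamma>"
proof -
  have "(1 + hq) / 2 - hq * (1 + (1 - hq) / 2) = (1 - hq)\<^sup>2 / 2"
    by (simp add: power2_eq_square field_simps)
  thus "hq * (1 + (1 - hq) / 2) \<le> \<Gamma>" unfolding \<Gamma>_def using zero_le_power2[of "1 - hq"] by linarith
  have "(1 + hq) / 2 - hq / ((1 + hq) / 2) = (1 - hq)\<^sup>2 / (2 * (1 + hq))"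
    using hq by (simp add: power2_eq_square field_simps)
  moreover have "0 \<le> (1 - hq)\<^sup>2 / (2 * (1 + hq))" using hq by simp
  ultimately show "hq / ((1 + hq) / 2) \<le> \<Gamma>" unfolding \<Gamma>_def by linarith
qed

lemma residue_const_pos: "0 < \<delta>1 \<Longrightarrow> 0 < residue_const \<delta>1"
  unfolding residue_const_def using LG_pos by simp

end

locale residue_setting = kernel_setting +
  fixes r :: nat and \<delta>1 :: real
  assumes r: "r > 0" and \<delta>1: "0 < \<delta>1"
    and \<delta>1_sep: "\<And>i i'. i \<in> {1..N} \<Longrightarrow> i' \<in> {1..N} \<Longrightarrow> i \<noteq> i' \<Longrightarrow> \<delta>1 \<le> \<bar>a i - a i'\<bar>"
begin

definition u :: nat where "u = uidx N r"
definition j :: nat where "j = jidx N r"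
definition c :: real where "c = 1 / atil q N a r"
definition \<delta> :: real where "\<delta> = min ((1 - hq) / 2) (hq * \<delta>1 / 2)"

text \<open>At w = c (1 + \<zeta>) the l-th factor of (a_i w; q) is 1 - \<xi> i l (1 + \<zeta>); it vanishes for
  i = j, l = u and \<zeta> = 0, which is the pole of the residue.\<close>
definition \<xi> :: "nat \<Rightarrow> nat \<Rightarrow> real" where "\<xi> i l = a i * c * q ^ l"
definition factor_norm :: "complex \<Rightarrow> nat \<Rightarrow> nat \<Rightarrow> real" where
  "factor_norm \<zeta> i l = norm (1 - complex_of_real (\<xi> i l) * (1 + \<zeta>))"

lemma j: "j \<in> {1..N}" unfolding j_def by (rule jidx_in[OF r])

lemma a_j: "0 < a j" "a j < 1" using a_pos[OF j] a_lt1[OF j] by auto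

lemma c_eq: "c = 1 / (a j * q ^ u)"
  unfolding c_def atil_def j_def u_def ..

lemma c_gt1: "1 < c" using atil_pos[OF r] atil_lt1[OF r] unfolding c_def by (simp add: less_divide_eq)

lemma c_pos: "0 < c" using c_gt1 by simp

lemma ratio_lt_inverse_hq: "i \<in> {1..N} \<Longrightarrow> i' \<in> {1..N} \<Longrightarrow> a i / a i' < 1 / hq"
proof -
  assume i: "i \<in> {1..N}" and i': "i' \<in> {1..N}"
  have "a i / a i' \<le> a 1 / a N"
    using a_le_a1[OF i] a_ge_aN[OF i'] a_pos[OF i] a_pos[OF i'] aN by (intro frac_le) auto
  also have "\<dots> < q powr (-1/2 + \<epsilon>)" by (rule ratio)
  also have "\<dots> \<le> q powr (-(1/2))" using q eps by (intro powr_mono') auto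
  also have "\<dots> = 1 / hq" unfolding hq_def by (rule powr_minus_divide)
  finally show ?thesis .
qed

lemma \<delta>: "0 < \<delta>" "\<delta> \<le> (1 - hq) / 2" "\<delta> \<le> hq * \<delta>1 / 2" "\<delta> \<le> 1/2"
  unfolding \<delta>_def using hq \<delta>1 by (auto simp: min_def)

lemma xi_pos: "i \<in> {1..N} \<Longrightarrow> 0 < \<xi> i l"
  unfolding \<xi>_def using a_pos c_gt1 q by auto

lemma xi_eq: "i \<in> {1..N} \<Longrightarrow> \<xi> i u = a i / a j"
  unfolding \<xi>_def c_eq using a_j q by (simp add: field_simps)

lemma inverse_xi_below: assumes i: "i \<in> {1..N}" and l: "l < u"
  shows "1 / \<xi> i l \<le> hq * q ^ (u - 1 - l)"
proof -
  have "1 / \<xi> i l = (a j / a i) * q ^ (u - l)"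
    unfolding \<xi>_def c_eq using a_pos[OF i] a_j q l by (simp add: field_simps power_diff)
  also have "\<dots> \<le> (1 / hq) * q ^ (u - l)"
    using ratio_lt_inverse_hq[OF j i] q by (intro mult_right_mono) auto
  also have "q ^ (u - l) = hq\<^sup>2 * q ^ (u - 1 - l)"
    using l hq by (simp add: power_Suc[symmetric] Suc_diff_Suc)
  also have "(1 / hq) * (hq\<^sup>2 * q ^ (u - 1 - l)) = hq * q ^ (u - 1 - l)"
    using hq(1) by (simp add: power2_eq_square)
  finally show ?thesis .
qed

lemma xi_above: assumes i: "i \<in> {1..N}" and l: "u < l"
  shows "\<xi> i l \<le> hq * q ^ (l - u - 1)"
proof -
  have "\<xi> i l = (a i / a j) * q ^ (l - u)"
    unfolding \<xi>_def c_eq using a_pos[OF i] a_j q l by (simp add: field_simps power_diff)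
  also have "\<dots> \<le> (1 / hq) * q ^ (l - u)"
    using ratio_lt_inverse_hq[OF i j] q by (intro mult_right_mono) auto
  also have "q ^ (l - u) = hq\<^sup>2 * q ^ (l - u - 1)"
    using l hq by (simp add: power_Suc[symmetric] Suc_diff_Suc)
  also have "(1 / hq) * (hq\<^sup>2 * q ^ (l - u - 1)) = hq * q ^ (l - u - 1)"
    using hq(1) by (simp add: power2_eq_square)
  finally show ?thesis .
qed


lemma factor_norm_below:
  assumes i: "i \<in> {1..N}" and l: "l < u" and z: "norm \<zeta> \<le> \<delta>"
  shows "\<xi> i l * (1 - norm \<zeta>) * (1 - \<Gamma> * q ^ (u - 1 - l)) \<le> factor_norm \<zeta> i l"
proof -
  define x where "x = \<xi> i l * (1 - norm \<zeta>)"
  have z1: "(1 + hq) / 2 \<le> 1 - norm \<zeta>" using order_trans[OF z \<delta>(2)] by (simp add: field_simps)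
  have x0: "0 < x" unfolding x_def using xi_pos[OF i] z1 hq by simp
  have "1 / x = (1 / \<xi> i l) * (1 / (1 - norm \<zeta>))" unfolding x_def by simp
  also have "\<dots> \<le> (hq * q ^ (u - 1 - l)) * (1 / ((1 + hq) / 2))"
    using inverse_xi_below[OF i l] z1 hq q xi_pos[OF i, of l]
    by (intro mult_mono frac_le) auto
  also have "\<dots> = (hq / ((1 + hq) / 2)) * q ^ (u - 1 - l)" by simp
  also have "\<dots> \<le> \<Gamma> * q ^ (u - 1 - l)" using hq_le_Gamma(2) q by (intro mult_right_mono) auto
  finally have "1 \<le> x * (\<Gamma> * q ^ (u - 1 - l))" using x0 by (simp add: divide_le_eq mult.commute)
  hence "x * (1 - \<Gamma> * q ^ (u - 1 - l)) \<le> x - 1" by (simp add: algebra_simps)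
  also have "\<dots> \<le> factor_norm \<zeta> i l"
    unfolding x_def factor_norm_def by (rule norm_one_minus_scaled_ge_large[OF less_imp_le[OF xi_pos[OF i]]])
  finally show ?thesis unfolding x_def .
qed

lemma factor_norm_above:
  assumes i: "i \<in> {1..N}" and l: "u < l" and z: "norm \<zeta> \<le> \<delta>"
  shows "1 - \<Gamma> * q ^ (l - u - 1) \<le> factor_norm \<zeta> i l"
proof -
  have x0: "0 \<le> \<xi> i l" using less_imp_le[OF xi_pos[OF i]] .
  have "\<xi> i l * (1 + norm \<zeta>) \<le> (hq * q ^ (l - u - 1)) * (1 + (1 - hq) / 2)"
    using xi_above[OF i l] z \<delta> x0 by (intro mult_mono) auto
  also have "\<dots> = (hq * (1 + (1 - hq) / 2)) * q ^ (l - u - 1)" by simp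
  also have "\<dots> \<le> \<Gamma> * q ^ (l - u - 1)" using hq_le_Gamma(1) q by (intro mult_right_mono) auto
  finally show ?thesis
    using norm_one_minus_scaled_ge_small[OF x0, of \<zeta>] unfolding factor_norm_def by linarith
qed

lemma factor_norm_pole: "factor_norm \<zeta> j u = norm \<zeta>"
  unfolding factor_norm_def using xi_eq[OF j] a_j by simp

lemma factor_norm_at_u:
  assumes i: "i \<in> {1..N}" and ij: "i \<noteq> j"
  shows "\<delta>1 - norm \<zeta> / hq \<le> factor_norm \<zeta> i u"
proof -
  define x where "x = a i / a j"
  have x0: "0 < x" unfolding x_def using a_pos[OF i] a_j by simp
  have "\<delta>1 \<le> \<bar>a j - a i\<bar>" using \<delta>1_sep[OF j i] ij by auto
  also have "\<dots> \<le> \<bar>a j - a i\<bar> / a j" using a_j by (simp add: le_divide_eq mult_left_le)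
  also have "\<dots> = \<bar>1 - x\<bar>" unfolding x_def using a_j by (simp add: field_simps abs_div)
  finally have "\<delta>1 \<le> \<bar>1 - x\<bar>" .
  moreover have "norm (complex_of_real (1 - x)) = \<bar>1 - x\<bar>" by (rule norm_of_real)
  moreover have "1 - complex_of_real x * (1 + \<zeta>) = complex_of_real (1 - x) - complex_of_real x * \<zeta>"
    by (simp add: algebra_simps)
  hence "norm (complex_of_real (1 - x)) - norm (complex_of_real x * \<zeta>) \<le> factor_norm \<zeta> i u"
    unfolding factor_norm_def xi_eq[OF i] x_def[symmetric] by (simp only: norm_triangle_ineq2)
  moreover have "x * norm \<zeta> \<le> (1 / hq) * norm \<zeta>"
    using ratio_lt_inverse_hq[OF i j] unfolding x_def by (intro mult_right_mono) auto
  ultimately show ?thesis using x0 by (simp add: norm_mult)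
qed

lemma factor_norm_pos:
  assumes i: "i \<in> {1..N}" and z: "norm \<zeta> < 2 * \<delta>" "\<zeta> \<noteq> 0"
  shows "0 < factor_norm \<zeta> i l"
proof -
  have x0: "0 < \<xi> i l" by (rule xi_pos[OF i])
  have d2: "2 * \<delta> \<le> 1 - hq" "2 * \<delta> \<le> hq * \<delta>1" using \<delta> by auto
  consider "l < u" | "u < l" | "l = u" "i = j" | "l = u" "i \<noteq> j" by linarith
  thus ?thesis
  proof cases
    case 1
    have "1 / \<xi> i l \<le> hq * q ^ (u - 1 - l)" by (rule inverse_xi_below[OF i 1])
    also have "\<dots> \<le> hq" using hq q by (simp add: mult_left_le power_le_one)
    finally have "1 \<le> \<xi> i l * hq" using x0 by (simp add: divide_le_eq mult.commute)
    also have "\<xi> i l * hq < \<xi> i l * (1 - norm \<zeta>)" using x0 z d2 by (intro mult_strict_left_mono) auto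
    finally show ?thesis
      using norm_one_minus_scaled_ge_large[of "\<xi> i l" \<zeta>] x0 unfolding factor_norm_def by auto
  next
    case 2
    have "\<xi> i l \<le> hq * q ^ (l - u - 1)" by (rule xi_above[OF i 2])
    also have "\<dots> \<le> hq" using hq q by (simp add: mult_left_le power_le_one)
    finally have "\<xi> i l * (1 + norm \<zeta>) \<le> hq * (1 + norm \<zeta>)" by (intro mult_right_mono) auto
    also have "\<dots> < hq * (2 - hq)" using hq z d2 by (intro mult_strict_left_mono) auto
    also have "\<dots> \<le> 1" using zero_le_power2[of "1 - hq"] by (simp add: power2_eq_square algebra_simps)
    finally show ?thesis
      using norm_one_minus_scaled_ge_small[of "\<xi> i l" \<zeta>] x0 unfolding factor_norm_def by auto
  next
    case 3
    thus ?thesis using factor_norm_pole[of \<zeta>] z by auto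
  next
    case 4
    have "norm \<zeta> / hq < \<delta>1" using z d2 hq by (simp add: divide_less_eq mult.commute)
    thus ?thesis using factor_norm_at_u[OF i 4(2), of \<zeta>] 4(1) by auto
  qed
qed

lemma prod_factor_norm_below_ge:
  assumes i: "i \<in> {1..N}" and z: "norm \<zeta> \<le> \<delta>" and half: "1/2 \<le> (1 - norm \<zeta>) ^ u"
  shows "(1/2) * (\<Prod>l<u. \<xi> i l) * LG \<le> (\<Prod>l<u. factor_norm \<zeta> i l)"
proof -
  have z1: "norm \<zeta> \<le> 1" using \<delta>(4) z by linarith
  have X0: "0 \<le> (\<Prod>l<u. \<xi> i l)" by (intro prod_nonneg) (use xi_pos[OF i] in \<open>auto intro: less_imp_le\<close>)
  have "LG \<le> (\<Prod>l<u. 1 - \<Gamma> * q ^ (u - 1 - l))"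
    unfolding LG_def using \<Gamma> q by (intro prod_one_minus_geometric_reindex_ge_exp) (auto simp: inj_on_def)
  hence "(\<Prod>l<u. \<xi> i l) * (1/2) * LG
      \<le> (\<Prod>l<u. \<xi> i l) * (1 - norm \<zeta>) ^ u * (\<Prod>l<u. 1 - \<Gamma> * q ^ (u - 1 - l))"
    using half X0 LG_pos by (intro mult_mono mult_left_mono) auto
  also have "\<dots> = (\<Prod>l<u. \<xi> i l * (1 - norm \<zeta>) * (1 - \<Gamma> * q ^ (u - 1 - l)))"
    by (simp add: prod.distrib)
  also have "\<dots> \<le> (\<Prod>l<u. factor_norm \<zeta> i l)"
  proof (rule prod_mono)
    fix l assume "l \<in> {..<u}"
    moreover have "0 \<le> \<xi> i l * (1 - norm \<zeta>) * (1 - \<Gamma> * q ^ (u - 1 - l))"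
      using xi_pos[OF i, of l] z1 one_minus_Gamma_power_nonneg[of "u - 1 - l"] by simp
    ultimately show "0 \<le> \<xi> i l * (1 - norm \<zeta>) * (1 - \<Gamma> * q ^ (u - 1 - l)) \<and>
        \<xi> i l * (1 - norm \<zeta>) * (1 - \<Gamma> * q ^ (u - 1 - l)) \<le> factor_norm \<zeta> i l"
      using factor_norm_below[OF i _ z, of l] by auto
  qed
  finally show ?thesis by (simp add: mult_ac)
qed

lemma prod_factor_norm_above_ge:
  assumes i: "i \<in> {1..N}" and z: "norm \<zeta> \<le> \<delta>"
  shows "LG \<le> (\<Prod>l\<in>{u<..<n}. factor_norm \<zeta> i l)"
proof -
  have "LG \<le> (\<Prod>l\<in>{u<..<n}. 1 - \<Gamma> * q ^ (l - u - 1))"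
    unfolding LG_def using \<Gamma> q by (intro prod_one_minus_geometric_reindex_ge_exp) (auto simp: inj_on_def)
  also have "\<dots> \<le> (\<Prod>l\<in>{u<..<n}. factor_norm \<zeta> i l)"
  proof (rule prod_mono)
    fix l assume "l \<in> {u<..<n}"
    thus "0 \<le> 1 - \<Gamma> * q ^ (l - u - 1) \<and> 1 - \<Gamma> * q ^ (l - u - 1) \<le> factor_norm \<zeta> i l"
      using factor_norm_above[OF i _ z, of l] one_minus_Gamma_power_nonneg[of "l - u - 1"] by auto
  qed
  finally show ?thesis .
qed

lemma norm_qpoch_near_pole_ge:
  assumes i: "i \<in> {1..N}" and z: "norm \<zeta> \<le> \<delta>" and half: "1/2 \<le> (1 - norm \<zeta>) ^ u"
  shows "(1/2) * LG\<^sup>2 * (if i = j then norm \<zeta> else \<delta>1 / 2) * (\<Prod>l<u. \<xi> i l)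
         \<le> norm (qpoch (complex_of_real (a i) * (complex_of_real c * (1 + \<zeta>))) q)"
proof (rule norm_qpoch_ge[OF q, of "Suc u"])
  fix n assume n: "Suc u \<le> n"
  let ?f = "factor_norm \<zeta> i"
  have f0: "0 \<le> ?f l" for l unfolding factor_norm_def by simp
  have mid: "(if i = j then norm \<zeta> else \<delta>1 / 2) \<le> ?f u"
  proof (cases "i = j")
    case False
    have "norm \<zeta> / hq \<le> \<delta>1 / 2" using z \<delta> hq by (simp add: divide_le_eq mult.commute)
    thus ?thesis using factor_norm_at_u[OF i False, of \<zeta>] False by simp
  qed (simp add: factor_norm_pole)
  have "(1/2) * LG\<^sup>2 * (if i = j then norm \<zeta> else \<delta>1 / 2) * (\<Prod>l<u. \<xi> i l)
      = ((1/2) * (\<Prod>l<u. \<xi> i l) * LG) * (if i = j then norm \<zeta> else \<delta>1 / 2) * LG"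
    by (simp add: power2_eq_square mult_ac)
  also have "\<dots> \<le> (\<Prod>l<u. ?f l) * ?f u * (\<Prod>l\<in>{u<..<n}. ?f l)"
    using prod_factor_norm_below_ge[OF i z half] prod_factor_norm_above_ge[OF i z] mid \<delta>1 LG_pos
      prod_nonneg[of "{..<u}" ?f] f0
    by (intro mult_mono) (auto intro: prod_nonneg)
  also have "\<dots> = (\<Prod>l<n. ?f l)"
    using n by (intro prod_lessThan_split_at[symmetric]) auto
  also have "\<dots> = norm (\<Prod>l<n. 1 - complex_of_real (a i) * (complex_of_real c * (1 + \<zeta>)) * complex_of_real (q ^ l))"
    unfolding factor_norm_def \<xi>_def prod_norm[symmetric] by (simp add: mult_ac del: of_real_power)
  finally show "(1/2) * LG\<^sup>2 * (if i = j then norm \<zeta> else \<delta>1 / 2) * (\<Prod>l<u. \<xi> i l)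
      \<le> norm (\<Prod>l<n. 1 - complex_of_real (a i) * (complex_of_real c * (1 + \<zeta>)) * complex_of_real (q ^ l))" .
qed

definition B_prod :: "complex \<Rightarrow> complex" where
  "B_prod w = (\<Prod>i\<in>{1..N}. qpoch (complex_of_real (b i) / w) q / qpoch (complex_of_real (a i) * w) q)"

definition B_disc :: "complex set" where "B_disc = ball (complex_of_real c) (2 * \<delta> * c)"

lemma B_disc_zeta:
  assumes w: "w \<in> B_disc"
  defines "\<zeta> \<equiv> w / complex_of_real c - 1"
  shows "w = complex_of_real c * (1 + \<zeta>)" "norm \<zeta> < 2 * \<delta>" "w \<noteq> complex_of_real c \<Longrightarrow> \<zeta> \<noteq> 0"
    "w \<noteq> 0"
proof -
  show e: "w = complex_of_real c * (1 + \<zeta>)" unfolding \<zeta>_def using c_pos by (simp add: field_simps)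
  have "norm \<zeta> = norm (w - complex_of_real c) / c"
    unfolding \<zeta>_def using c_pos by (simp add: field_simps norm_divide)
  also have "\<dots> < 2 * \<delta>"
    using w c_pos unfolding B_disc_def by (simp add: dist_norm norm_minus_commute divide_less_eq)
  finally show n: "norm \<zeta> < 2 * \<delta>" .
  show "w \<noteq> complex_of_real c \<Longrightarrow> \<zeta> \<noteq> 0" unfolding \<zeta>_def using c_pos by auto
  have "norm \<zeta> < 1" using n \<delta>(4) by linarith
  hence "1 + \<zeta> \<noteq> 0" by (metis add.inverse_unique norm_minus_cancel norm_one less_irrefl)
  thus "w \<noteq> 0" using e c_pos by simp
qed

lemma holomorphic_B_prod: "B_prod holomorphic_on (B_disc - {complex_of_real c})"
  unfolding B_prod_def
proof (intro holomorphic_on_prod holomorphic_on_divide)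
  fix i assume i: "i \<in> {1..N}"
  show "(\<lambda>w. qpoch (complex_of_real (b i) / w) q) holomorphic_on (B_disc - {complex_of_real c})"
    using B_disc_zeta(4) by (intro holomorphic_on_qpoch_compose q holomorphic_intros) auto
  show "(\<lambda>w. qpoch (complex_of_real (a i) * w) q) holomorphic_on (B_disc - {complex_of_real c})"
    by (intro holomorphic_on_qpoch_compose q holomorphic_intros)
  show "qpoch (complex_of_real (a i) * w) q \<noteq> 0" if w: "w \<in> B_disc - {complex_of_real c}" for w
  proof (rule qpoch_nonzero[OF q])
    fix l
    define \<zeta> where "\<zeta> = w / complex_of_real c - 1"
    have we: "w = complex_of_real c * (1 + \<zeta>)" and zz: "norm \<zeta> < 2 * \<delta>" "\<zeta> \<noteq> 0"
      using B_disc_zeta[of w] w unfolding \<zeta>_def by auto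
    have "0 < norm (1 - complex_of_real (a i) * w * complex_of_real (q ^ l))"
      using factor_norm_pos[OF i zz, of l] unfolding we factor_norm_def \<xi>_def by (simp add: mult_ac)
    thus "complex_of_real (a i) * w * complex_of_real (q ^ l) \<noteq> 1" by auto
  qed
qed

lemma half_le_power: "1/2 \<le> (1 - \<delta> / (real u + 1)) ^ u"
proof -
  have "1 + real u * (- (\<delta> / (real u + 1))) \<le> (1 + - (\<delta> / (real u + 1))) ^ u"
    using \<delta> by (intro Bernoulli_inequality) (auto simp: field_simps)
  moreover have "real u * (\<delta> / (real u + 1)) \<le> \<delta>"
    using \<delta> by (simp add: field_simps)
  ultimately show ?thesis using \<delta>(4) by simp
qed

lemma circle_around_c:
  assumes w: "norm (w - complex_of_real c) = \<delta> / (real u + 1) * c"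
  shows "norm (w / complex_of_real c - 1) = \<delta> / (real u + 1)" "c / 2 \<le> norm w"
proof -
  show "norm (w / complex_of_real c - 1) = \<delta> / (real u + 1)"
    using w c_pos by (simp add: field_simps norm_divide)
  have "c - \<delta> / (real u + 1) * c \<le> norm w"
    using norm_triangle_ineq2[of "complex_of_real c" w] w c_pos by (simp add: norm_minus_commute)
  moreover have "\<delta> / (real u + 1) * c \<le> (1/2) * c"
    using \<delta> c_pos by (intro mult_right_mono) (auto simp: field_simps)
  ultimately show "c / 2 \<le> norm w" by linarith
qed

lemma norm_qpoch_b_le:
  assumes i: "i \<in> {1..N}" and w: "c / 2 \<le> norm w"
  shows "norm (qpoch (complex_of_real (b i) / w) q) \<le> exp (2 / (1 - q))"
proof (rule norm_qpoch_le_exp[OF q])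
  have "norm (complex_of_real (b i) / w) = b i / norm w" using b_range[of i] i by (simp add: norm_divide)
  also have "\<dots> \<le> 1 / (c / 2)" using b_range[of i] i w c_pos by (intro frac_le) auto
  also have "\<dots> \<le> 2" using c_gt1 by (simp add: divide_le_eq)
  finally show "norm (complex_of_real (b i) / w) \<le> 2" .
qed

text \<open>The circle |w - c| = \<eta> c with \<eta> = \<delta> / (u + 1) is chosen so that (1 - \<eta>)^u \<ge> 1/2.\<close>
lemma norm_B_prod_le_circle:
  assumes w: "norm (w - complex_of_real c) = \<delta> / (real u + 1) * c"
  shows "norm (B_prod w) \<le> exp (2 / (1 - q)) ^ N /
    (((1/2) * LG\<^sup>2) ^ N * (\<delta> / (real u + 1)) * (\<delta>1 / 2) ^ (N - 1) * (\<Prod>i\<in>{1..N}. \<Prod>l<u. \<xi> i l))"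
proof -
  define \<eta> where "\<eta> = \<delta> / (real u + 1)"
  define U where "U = exp (2 / (1 - q))"
  define \<zeta> where "\<zeta> = w / complex_of_real c - 1"
  define low where "low i = (1/2) * LG\<^sup>2 * (if i = j then norm \<zeta> else \<delta>1 / 2) * (\<Prod>l<u. \<xi> i l)" for i
  have \<eta>: "0 < \<eta>" "\<eta> \<le> \<delta>" unfolding \<eta>_def using \<delta> by (auto simp: field_simps)
  have we: "w = complex_of_real c * (1 + \<zeta>)" unfolding \<zeta>_def using c_pos by (simp add: field_simps)
  have nz: "norm \<zeta> = \<eta>" unfolding \<zeta>_def \<eta>_def by (rule circle_around_c(1)[OF w])
  have low0: "0 < low i" if "i \<in> {1..N}" for i
  proof -
    have "0 < (\<Prod>l<u. \<xi> i l)" using xi_pos[OF that] by (intro prod_pos) auto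
    moreover have "0 < (if i = j then norm \<zeta> else \<delta>1 / 2)" using \<delta>1 nz \<eta> by auto
    ultimately show ?thesis unfolding low_def using LG_pos by simp
  qed
  have "(\<Prod>i\<in>{1..N}. low i) = (\<Prod>i\<in>{1..N}. (1/2) * LG\<^sup>2) *
      (\<Prod>i\<in>{1..N}. if i = j then norm \<zeta> else \<delta>1 / 2) * (\<Prod>i\<in>{1..N}. \<Prod>l<u. \<xi> i l)"
    unfolding low_def by (simp only: prod.distrib)
  hence prod_low: "(\<Prod>i\<in>{1..N}. low i) =
      ((1/2) * LG\<^sup>2) ^ N * \<eta> * (\<delta>1 / 2) ^ (N - 1) * (\<Prod>i\<in>{1..N}. \<Prod>l<u. \<xi> i l)"
    using prod_if_eq_single[of "{1..N}" j "norm \<zeta>" "\<delta>1 / 2"] j nz by simp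
  have "norm (B_prod w) = (\<Prod>i\<in>{1..N}.
      norm (qpoch (complex_of_real (b i) / w) q) / norm (qpoch (complex_of_real (a i) * w) q))"
    unfolding B_prod_def by (simp add: prod_norm[symmetric] norm_divide)
  also have "\<dots> \<le> (\<Prod>i\<in>{1..N}. U / low i)"
  proof (rule prod_mono)
    fix i assume i: "i \<in> {1..N}"
    have "norm (qpoch (complex_of_real (b i) / w) q) \<le> U"
      unfolding U_def by (rule norm_qpoch_b_le[OF i circle_around_c(2)[OF w]])
    moreover have "low i \<le> norm (qpoch (complex_of_real (a i) * w) q)"
      unfolding low_def we using nz \<eta> half_le_power unfolding \<eta>_def
      by (intro norm_qpoch_near_pole_ge[OF i]) auto
    ultimately show "0 \<le> norm (qpoch (complex_of_real (b i) / w) q) / norm (qpoch (complex_of_real (a i) * w) q) \<and>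
        norm (qpoch (complex_of_real (b i) / w) q) / norm (qpoch (complex_of_real (a i) * w) q) \<le> U / low i"
      using low0[OF i] unfolding U_def by (auto intro: frac_le)
  qed
  also have "\<dots> = U ^ N / (((1/2) * LG\<^sup>2) ^ N * \<eta> * (\<delta>1 / 2) ^ (N - 1) * (\<Prod>i\<in>{1..N}. \<Prod>l<u. \<xi> i l))"
    unfolding prod_low[symmetric] by (simp add: prod_dividef)
  finally show ?thesis by (simp only: U_def \<eta>_def)
qed

lemma norm_residue_B_prod_le:
  "norm (residue B_prod (complex_of_real c)) \<le>
     exp (2 / (1 - q)) ^ N / (((1/2) * LG\<^sup>2) ^ N * (\<delta>1 / 2) ^ (N - 1)) * c / (\<Prod>i\<in>{1..N}. \<Prod>l<u. \<xi> i l)"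
proof -
  define \<eta> where "\<eta> = \<delta> / (real u + 1)"
  define \<rho> where "\<rho> = \<eta> * c"
  define X where "X = (\<Prod>i\<in>{1..N}. \<Prod>l<u. \<xi> i l)"
  define B where "B = exp (2 / (1 - q)) ^ N / (((1/2) * LG\<^sup>2) ^ N * \<eta> * (\<delta>1 / 2) ^ (N - 1) * X)"
  have \<eta>: "0 < \<eta>" "\<eta> \<le> \<delta>" unfolding \<eta>_def using \<delta> by (auto simp: field_simps)
  have \<rho>0: "0 < \<rho>" unfolding \<rho>_def using \<eta> c_pos by simp
  have X0: "0 < X" unfolding X_def using xi_pos by (intro prod_pos) auto
  have B0: "0 \<le> B" unfolding B_def using LG_pos \<eta> \<delta>1 X0 by simp
  have "cball (complex_of_real c) \<rho> \<subseteq> B_disc"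
  proof -
    have "\<eta> * c \<le> \<delta> * c" using \<eta> c_pos by (intro mult_right_mono) auto
    moreover have "0 < \<delta> * c" using \<delta> c_pos by simp
    ultimately have "\<rho> < 2 * \<delta> * c" unfolding \<rho>_def by linarith
    thus ?thesis unfolding B_disc_def by (intro cball_subset_ball_iff[THEN iffD2]) auto
  qed
  moreover have "complex_of_real c \<in> B_disc" unfolding B_disc_def using \<delta> c_pos by simp
  moreover have "open B_disc" unfolding B_disc_def by simp
  ultimately have hc: "(B_prod has_contour_integral 2 * pi * \<i> * residue B_prod (complex_of_real c))
      (circlepath (complex_of_real c) \<rho>)"
    using base_residue[OF _ _ \<rho>0 holomorphic_B_prod] by blast
  have bnd: "norm (B_prod w) \<le> B" if "norm (w - complex_of_real c) = \<rho>" for w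
    using norm_B_prod_le_circle[OF that[unfolded \<rho>_def \<eta>_def]] unfolding B_def X_def \<eta>_def .
  have "norm (2 * pi * \<i> * residue B_prod (complex_of_real c)) \<le> B * (2 * pi * \<rho>)"
    by (rule has_contour_integral_bound_circlepath[OF hc B0 \<rho>0 bnd])
  hence "norm (residue B_prod (complex_of_real c)) \<le> B * \<rho>" by (simp add: norm_mult)
  also have "B * \<rho> = exp (2 / (1 - q)) ^ N / (((1/2) * LG\<^sup>2) ^ N * (\<delta>1 / 2) ^ (N - 1)) * c / X"
    unfolding B_def \<rho>_def using \<eta> X0 LG_pos \<delta>1 by (simp add: field_simps)
  finally show ?thesis by (simp only: X_def)
qed

lemma inverse_prod_xi_eq:
  assumes i: "i \<in> {1..N}"
  shows "1 / (\<Prod>l<u. \<xi> i l) = (a j / a i) ^ u * q powr (real u * (real u + 1) / 2)"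
proof -
  have "q ^ (u * u) = q powr (real u * real u)" using q powr_realpow[of q "u * u"] by simp
  hence "(1 / q ^ u) ^ u = q powr (- (real u * real u))"
    by (simp add: power_divide power_mult[symmetric] powr_minus_divide)
  hence "(1 / q ^ u) ^ u * (\<Prod>l<u. q ^ l) = q powr (- (real u * real u)) * q powr (real u * (real u - 1) / 2)"
    using q by (simp add: prod_lessThan_power_eq_powr)
  also have "\<dots> = q powr (- (real u * real u) + real u * (real u - 1) / 2)"
    by (rule powr_add[symmetric])
  also have "- (real u * real u) + real u * (real u - 1) / 2 = - (real u * (real u + 1) / 2)"
    by (simp add: field_simps)
  finally have qs: "(1 / q ^ u) ^ u * (\<Prod>l<u. q ^ l) = q powr (- (real u * (real u + 1) / 2))" .
  have "(\<Prod>l<u. \<xi> i l) = (\<Prod>l<u. (a i / a j * (1 / q ^ u)) * q ^ l)"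
    unfolding \<xi>_def c_eq by (intro prod.cong refl) simp
  also have "\<dots> = (a i / a j) ^ u * ((1 / q ^ u) ^ u * (\<Prod>l<u. q ^ l))"
    by (simp only: prod.distrib prod_constant card_lessThan mult.assoc)
  finally have "(\<Prod>l<u. \<xi> i l) = (a i / a j) ^ u * q powr (- (real u * (real u + 1) / 2))"
    unfolding qs .
  thus ?thesis using a_pos[OF i] a_j q by (simp add: powr_minus_divide power_divide)
qed

lemma prod_ratio_power_le: "(\<Prod>i\<in>{1..N}. (a j / a i) ^ u) \<le> (a 1 / a N) ^ (u * (N - 1))"
proof -
  have "(\<Prod>i\<in>{1..N}. (a j / a i) ^ u) = (a j / a j) ^ u * (\<Prod>i\<in>{1..N} - {j}. (a j / a i) ^ u)"
    using j by (intro prod.remove) auto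
  also have "\<dots> \<le> (\<Prod>i\<in>{1..N} - {j}. (a 1 / a N) ^ u)"
  proof -
    have "(\<Prod>i\<in>{1..N} - {j}. (a j / a i) ^ u) \<le> (\<Prod>i\<in>{1..N} - {j}. (a 1 / a N) ^ u)"
    proof (rule prod_mono)
      fix i assume i: "i \<in> {1..N} - {j}"
      have "a j / a i \<le> a 1 / a N"
        using a_le_a1[OF j] a_ge_aN[of i] i a_j a_pos[of i] aN by (intro frac_le) auto
      thus "0 \<le> (a j / a i) ^ u \<and> (a j / a i) ^ u \<le> (a 1 / a N) ^ u"
        using a_j a_pos[of i] i by (auto intro: power_mono)
    qed
    thus ?thesis using a_j by simp
  qed
  also have "\<dots> = (a 1 / a N) ^ (u * (N - 1))" using j by (simp add: power_mult)
  finally show ?thesis .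
qed

lemma norm_residue_B_prod_le_powr:
  "norm (residue B_prod (complex_of_real c)) \<le> residue_const \<delta>1 / a j *
     q powr (- real u + (-1/2 + \<epsilon>) * (real u * real N - real u) + real N * real u * (real u + 1) / 2)"
proof -
  have X0: "0 < (\<Prod>i\<in>{1..N}. \<Prod>l<u. \<xi> i l)" using xi_pos by (intro prod_pos) auto
  define Z where "Z = q powr (real u * (real u + 1) / 2)"
  have "1 / (\<Prod>i\<in>{1..N}. \<Prod>l<u. \<xi> i l) = (\<Prod>i\<in>{1..N}. 1 / (\<Prod>l<u. \<xi> i l))"
    by (simp add: prod_dividef)
  also have "\<dots> = (\<Prod>i\<in>{1..N}. (a j / a i) ^ u * Z)"
    unfolding Z_def by (intro prod.cong refl inverse_prod_xi_eq)
  also have "\<dots> = (\<Prod>i\<in>{1..N}. (a j / a i) ^ u) * Z ^ N" by (simp add: prod.distrib)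
  also have "\<dots> \<le> (a 1 / a N) ^ (u * (N - 1)) * Z ^ N"
    using prod_ratio_power_le q unfolding Z_def by (intro mult_right_mono) auto
  also have "\<dots> \<le> (q powr (-1/2 + \<epsilon>)) ^ (u * (N - 1)) * Z ^ N"
    using ratio a1 aN q unfolding Z_def by (intro mult_right_mono power_mono) auto
  also have "\<dots> = q powr ((-1/2 + \<epsilon>) * (real u * real N - real u)) * q powr (real N * real u * (real u + 1) / 2)"
    using q N unfolding Z_def by (simp add: powr_power of_nat_diff algebra_simps)
  finally have X: "1 / (\<Prod>i\<in>{1..N}. \<Prod>l<u. \<xi> i l) \<le>
      q powr ((-1/2 + \<epsilon>) * (real u * real N - real u)) * q powr (real N * real u * (real u + 1) / 2)" .
  have "norm (residue B_prod (complex_of_real c)) \<le> residue_const \<delta>1 * c * (1 / (\<Prod>i\<in>{1..N}. \<Prod>l<u. \<xi> i l))"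
    using norm_residue_B_prod_le unfolding residue_const_def by simp
  also have "\<dots> \<le> residue_const \<delta>1 * (1 / a j * q powr (- real u)) *
      (q powr ((-1/2 + \<epsilon>) * (real u * real N - real u)) * q powr (real N * real u * (real u + 1) / 2))"
    using X residue_const_pos[OF \<delta>1] c_pos q X0 unfolding c_eq
    by (intro mult_mono) (auto simp: powr_minus_divide powr_realpow)
  also have "\<dots> = residue_const \<delta>1 / a j *
      q powr (- real u + (-1/2 + \<epsilon>) * (real u * real N - real u) + real N * real u * (real u + 1) / 2)"
    by (simp only: powr_add) simp
  finally show ?thesis .
qed

lemma norm_Bker_eq:
  "norm (Bker q N a b r m) = atil q N a r powr (- real_of_int m) * norm (residue B_prod (complex_of_real c))"
proof -
  have "B_prod = (\<lambda>w. \<Prod>i\<in>{1..N}. qpoch (complex_of_real (b i) / w) q / qpoch (complex_of_real (a i) * w) q)"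
    by (rule ext) (simp add: B_prod_def)
  thus ?thesis unfolding Bker_def c_def by (simp add: norm_mult)
qed

lemma norm_Bker_le_powr:
  "norm (Bker q N a b r m) \<le> residue_const \<delta>1 / a j * a j powr (- real_of_int m) *
     q powr (- real u * real_of_int m - real u + (-1/2 + \<epsilon>) * (real u * real N - real u)
       + real N * real u * (real u + 1) / 2)"
proof -
  have at: "atil q N a r powr (- real_of_int m) = a j powr (- real_of_int m) * q powr (- real u * real_of_int m)"
    unfolding atil_def j_def[symmetric] u_def[symmetric] using a_j q
    by (simp add: powr_mult powr_powr powr_realpow[symmetric])
  have "norm (Bker q N a b r m) \<le> a j powr (- real_of_int m) * q powr (- real u * real_of_int m) *
      (residue_const \<delta>1 / a j *
        q powr (- real u + (-1/2 + \<epsilon>) * (real u * real N - real u) + real N * real u * (real u + 1) / 2))"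
    unfolding norm_Bker_eq at by (intro mult_left_mono norm_residue_B_prod_le_powr) simp
  also have "\<dots> = residue_const \<delta>1 / a j * a j powr (- real_of_int m) *
     q powr (- real u * real_of_int m - real u + (-1/2 + \<epsilon>) * (real u * real N - real u)
       + real N * real u * (real u + 1) / 2)"
    by (simp only: powr_add diff_conv_add_uminus) (simp add: ac_simps)
  finally show ?thesis .
qed

lemma norm_Bker_le_pos:
  assumes m: "0 \<le> m"
  shows "norm (Bker q N a b r m) \<le> (residue_const \<delta>1 / a N * q powr (- (\<epsilon>\<^sup>2 * real N / 2))) *
    a N powr (- real_of_int m) *
    q powr (- (real_of_int m ^ 2) / (2 * real N) + \<epsilon> * real_of_int m - (1/2 + \<epsilon>) * real u)"
proof -
  define E where "E = - real u * real_of_int m - real u + (-1/2 + \<epsilon>) * (real u * real N - real u)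
    + real N * real u * (real u + 1) / 2"
  define T where "T = - (real_of_int m ^ 2) / (2 * real N) + \<epsilon> * real_of_int m - (1/2 + \<epsilon>) * real u"
  have K: "0 < residue_const \<delta>1" by (rule residue_const_pos[OF \<delta>1])
  have "norm (Bker q N a b r m) \<le> residue_const \<delta>1 / a j * a j powr (- real_of_int m) * q powr E"
    unfolding E_def by (rule norm_Bker_le_powr)
  also have "\<dots> \<le> residue_const \<delta>1 / a N * a N powr (- real_of_int m) * q powr E"
    using a_ge_aN[OF j] aN m K by (intro mult_right_mono mult_mono divide_left_mono powr_mono2') auto
  also have "\<dots> \<le> residue_const \<delta>1 / a N * a N powr (- real_of_int m) * (q powr (- (\<epsilon>\<^sup>2 * real N / 2)) * q powr T)"
  proof (intro mult_left_mono)
    have "- (\<epsilon>\<^sup>2 * real N / 2) + T \<le> E"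
      using residue_exponent_bound[where m = "real_of_int m" and \<epsilon> = \<epsilon> and N = N and u = u] N unfolding E_def T_def by simp
    thus "q powr E \<le> q powr (- (\<epsilon>\<^sup>2 * real N / 2)) * q powr T"
      using q by (simp add: powr_add[symmetric] powr_mono')
  qed (use K aN in simp)
  finally show ?thesis unfolding T_def by (simp add: ac_simps)
qed

lemma norm_Bker_le_neg:
  assumes m: "m < 0"
  shows "norm (Bker q N a b r m) \<le> residue_const \<delta>1 / a N * a 1 powr (- real_of_int m) * q ^ u"
proof -
  define k where "k = - real_of_int m"
  define E where "E = real u * k - real u + (-1/2 + \<epsilon>) * (real u * real N - real u)
    + real N * real u * (real u + 1) / 2"
  have k1: "1 \<le> k" unfolding k_def using m by simp
  have K: "0 < residue_const \<delta>1" by (rule residue_const_pos[OF \<delta>1])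
  have uNu: "real u \<le> real N * real u * real u"
  proof (cases "u = 0")
    case False
    have "1 * 1 \<le> real N * real u" using N False by (intro mult_mono) auto
    thus ?thesis using mult_right_mono[of 1 "real N * real u" "real u"] by simp
  qed simp
  have "real u \<le> E"
  proof -
    have "real u \<le> real u * real N" using N by (simp add: mult_le_cancel_left1)
    hence "0 \<le> \<epsilon> * (real u * real N - real u)" using eps by simp
    moreover have "0 \<le> real u * k - real u" using k1 by (simp add: mult_le_cancel_left1)
    moreover have "0 \<le> (real N * real u * real u - real u) / 2" using uNu by simp
    moreover have "E = real u + ((real u * k - real u) + \<epsilon> * (real u * real N - real u)
        + (real N * real u * real u - real u) / 2)"
      unfolding E_def by (simp add: field_simps)
    ultimately show ?thesis by linarith
  qed
  have "norm (Bker q N a b r m) \<le> residue_const \<delta>1 / a j * a j powr k * q powr E"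
    using norm_Bker_le_powr[of m] unfolding k_def E_def by (simp add: algebra_simps)
  also have "\<dots> \<le> residue_const \<delta>1 / a N * a 1 powr k * q powr real u"
    using a_ge_aN[OF j] a_le_a1[OF j] a_j aN k1 K q \<open>real u \<le> E\<close>
    by (intro mult_mono divide_left_mono powr_mono2 powr_mono') auto
  finally show ?thesis unfolding k_def using q by (simp add: powr_realpow)
qed

end


context kernel_setting
begin

lemma Aker_bounds:
  assumes t: "t > 0" and b': "bmax < b'" "b' < 1"
  shows "\<exists>Cp Cm. Cp > 0 \<and> Cm > 0 \<and>
    (\<forall>m::int. \<forall>r::nat. r > 0 \<longrightarrow>
      (m \<ge> 0 \<longrightarrow> cmod (Aker q N a b t k m r) <
         Cp * a 1 powr (real_of_int m) *
         q powr (real_of_int m ^ 2 / (2 * real N) + real_of_int m / 2 + real (uidx N r))) \<and>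
      (m < 0 \<longrightarrow> cmod (Aker q N a b t k m r) < Cm * b' powr (- real_of_int m) * q ^ uidx N r))"
proof -
  define Cp where "Cp = t * gauss_const ^ N / kappa * q powr (- real N / 2)"
  define Cm where "Cm = (exp (1 / (1 - q)) / exp (- (bmax / b') / ((1 - bmax / b') * (1 - q)))) ^ N / (1 - a 1)"
  have Cp: "0 < Cp" unfolding Cp_def using t gauss_const_pos kappa_pos q by simp
  have Cm: "0 < Cm" unfolding Cm_def using a1 by simp
  have "cmod (Aker q N a b t k m r) < 2 * Cp * a 1 powr (real_of_int m) *
      q powr (real_of_int m ^ 2 / (2 * real N) + real_of_int m / 2 + real (uidx N r))"
    if "r > 0" "0 \<le> m" for m r
    using less_twice_bound[OF norm_Aker_le_pos[OF that(1) t that(2), unfolded Cp_def[symmetric] mult.assoc] Cp]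
      a1 q by (simp add: mult.assoc)
  moreover have "cmod (Aker q N a b t k m r) < 2 * Cm * b' powr (- real_of_int m) * q ^ uidx N r"
    if "r > 0" for m r
    using less_twice_bound[OF norm_Aker_le_neg[OF that t b', unfolded Cm_def[symmetric] mult.assoc] Cm]
      b' bmax q by (simp add: mult.assoc)
  ultimately show ?thesis using Cp Cm by (intro exI[of _ "2 * Cp"] exI[of _ "2 * Cm"]) auto
qed

lemma Bker_bounds:
  "\<exists>Dp Dm. Dp > 0 \<and> Dm > 0 \<and>
    (\<forall>m::int. \<forall>r::nat. r > 0 \<longrightarrow>
      (m \<ge> 0 \<longrightarrow> cmod (Bker q N a b r m) <
         Dp * a N powr (- real_of_int m) *
         q powr (- (real_of_int m ^ 2) / (2 * real N) + \<epsilon> * real_of_int m - (1/2 + \<epsilon>) * real (uidx N r))) \<and>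
      (m < 0 \<longrightarrow> cmod (Bker q N a b r m) < Dm * a 1 powr (- real_of_int m) * q ^ uidx N r))"
proof -
  obtain \<delta>1 where \<delta>1: "0 < \<delta>1" "\<forall>i\<in>{1..N}. \<forall>i'\<in>{1..N}. i \<noteq> i' \<longrightarrow> \<delta>1 \<le> \<bar>a i - a i'\<bar>"
    using inj_on_imp_separated[OF _ inj_on_a] by auto
  define Dp where "Dp = residue_const \<delta>1 / a N * q powr (- (\<epsilon>\<^sup>2 * real N / 2))"
  define Dm where "Dm = residue_const \<delta>1 / a N"
  have Dp: "0 < Dp" and Dm: "0 < Dm"
    unfolding Dp_def Dm_def using residue_const_pos[OF \<delta>1(1)] aN q by auto
  have "cmod (Bker q N a b r m) < 2 * Dp * a N powr (- real_of_int m) *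
      q powr (- (real_of_int m ^ 2) / (2 * real N) + \<epsilon> * real_of_int m - (1/2 + \<epsilon>) * real (uidx N r))"
    if "r > 0" "0 \<le> m" for m r
  proof -
    interpret residue_setting q \<epsilon> N a b r \<delta>1
      using that(1) \<delta>1 by unfold_locales auto
    show ?thesis
      using less_twice_bound[OF norm_Bker_le_pos[OF that(2), unfolded Dp_def[symmetric] mult.assoc] Dp] aN q
      unfolding u_def by (simp add: mult.assoc)
  qed
  moreover have "cmod (Bker q N a b r m) < 2 * Dm * a 1 powr (- real_of_int m) * q ^ uidx N r"
    if "r > 0" "m < 0" for m r
  proof -
    interpret residue_setting q \<epsilon> N a b r \<delta>1
      using that(1) \<delta>1 by unfold_locales auto
    show ?thesis
      using less_twice_bound[OF norm_Bker_le_neg[OF that(2), unfolded Dm_def[symmetric] mult.assoc] Dm] a1 q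
      unfolding u_def by (simp add: mult.assoc)
  qed
  ultimately show ?thesis using Dp Dm by (intro exI[of _ "2 * Dp"] exI[of _ "2 * Dm"]) auto
qed

end

theorem lemmaB1:
  fixes q \<epsilon> t :: real and k N :: nat and a b :: "nat \<Rightarrow> real"
  assumes q: "0 < q" "q < 1"
    and N: "N \<ge> 1"
    and a_dec: "\<And>i j. 1 \<le> i \<Longrightarrow> i < j \<Longrightarrow> j \<le> N \<Longrightarrow> a j < a i"
    and a_range: "\<And>i. 1 \<le> i \<Longrightarrow> i \<le> N \<Longrightarrow> 0 < a i \<and> a i < 1"
    and b_range: "\<And>i. 1 \<le> i \<Longrightarrow> i \<le> N \<Longrightarrow> 0 < b i \<and> b i < 1"
    and b_dist: "\<And>i j. 1 \<le> i \<Longrightarrow> i \<le> N \<Longrightarrow> 1 \<le> j \<Longrightarrow> j \<le> N \<Longrightarrow> i \<noteq> j \<Longrightarrow> b i \<noteq> b j"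
    and ab_dist: "\<And>i j. 1 \<le> i \<Longrightarrow> i \<le> N \<Longrightarrow> 1 \<le> j \<Longrightarrow> j \<le> N \<Longrightarrow> a i \<noteq> b j"
    and eps: "0 < \<epsilon>" "\<epsilon> < 1/2"
    and ratio: "a 1 / a N < q powr (-1/2 + \<epsilon>)"
    and t: "t > 0"
  shows
    "(\<forall>b'. Max (b ` {1..N}) < b' \<and> b' < 1 \<longrightarrow>
        (\<exists>Cp Cm. Cp > 0 \<and> Cm > 0 \<and>
          (\<forall>m::int. \<forall>r::nat. r > 0 \<longrightarrow>
             (m \<ge> 0 \<longrightarrow> cmod (Aker q N a b t k m r) <
                Cp * a 1 powr (real_of_int m) *
                q powr (real_of_int m ^ 2 / (2 * real N) + real_of_int m / 2 + real (uidx N r))) \<and>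
             (m < 0 \<longrightarrow> cmod (Aker q N a b t k m r) <
                Cm * b' powr (- real_of_int m) * q ^ uidx N r)))) \<and>
     (\<exists>Dp Dm. Dp > 0 \<and> Dm > 0 \<and>
        (\<forall>m::int. \<forall>r::nat. r > 0 \<longrightarrow>
           (m \<ge> 0 \<longrightarrow> cmod (Bker q N a b r m) <
              Dp * a N powr (- real_of_int m) *
              q powr (- (real_of_int m ^ 2) / (2 * real N) + \<epsilon> * real_of_int m
                      - (1/2 + \<epsilon>) * real (uidx N r))) \<and>
           (m < 0 \<longrightarrow> cmod (Bker q N a b r m) <
              Dm * a 1 powr (- real_of_int m) * q ^ uidx N r)))"
proof -
  interpret kernel_setting q \<epsilon> N a b
    using q N a_dec a_range b_range eps ratio by unfold_locales auto
  show ?thesis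
    using Aker_bounds[OF t] Bker_bounds unfolding bmax_def by blast
qed

end
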